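(* Let $0<\varepsilon\le1$. For every $f\in\mathfrak M_{\varepsilon,0}$ one has $(h_\varepsilon S_\varepsilon-S_\varepsilon h_\varepsilon)f=-if$, and for every $f\in\mathfrak M_{\varepsilon,1}$ one has $(h_\varepsilon S^*_\varepsilon-S^*_\varepsilon h_\varepsilon)f=-if$ (all operator products being defined on these vectors).
   Context: Work in $L^2(\mathbb{R})$. Let $q$ be multiplication by $x$, $p=-i\,d/dx$, $t=q^{-1}p$ with $D(t)=\{f\in D(p):pf\in D(q^{-1})\}$, $t^*$ its adjoint; $L^2_0$, $L^2_1$ the even/odd subspaces. For $0<\varepsilon\le1$, $h_\varepsilon=\frac12(\varepsilon p^2+q^2)$ on $D(p^2)\cap D(q^2)$. Define $S_\varepsilon$ in $L^2_0$ by $D(S_\varepsilon)=\{f\in L^2_0\cap\bigcap_nD(t^{2n+1}):\sum_{n=0}^N\frac{(-1)^n}{2n+1}(\sqrt\varepsilon t)^{2n+1}f$ converges in norm$\}$, $S_\varepsilon f=-\varepsilon^{-1/2}\sum_{n\ge0}\frac{(-1)^n}{2n+1}(\sqrt\varepsilon t)^{2n+1}f$, and $S^*_\varepsilon$ (notation only) in $L^2_1$ by the same formulas with $t^*$ and $L^2_1$. $\mathfrak M_{\varepsilon,0}$ is the span of $\{x^{2n}e^{-\alpha x^2/(2\sqrt\varepsilon)}:n\ge0,\alpha\in(0,1)\}$ and $\mathfrak M_{\varepsilon,1}$ the span of $\{x^{2n+1}e^{-\alpha x^2/(2\sqrt\varepsilon)}:n\ge0,\alpha\in(0,1)\}$.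 *)

theory Defs
  imports "HOL-Analysis.Analysis"
begin

text \<open>Elements of L^2(R) are represented by measurable functions real => complex
  with square-integrable modulus; equality is almost-everywhere equality.
  (Unbounded) operators are represented by their graphs, as binary relations
  A f g meaning "f is in D(A) and A f = g (a.e.)".\<close>

type_synonym fn = "real \<Rightarrow> complex"
type_synonym oper = "fn \<Rightarrow> fn \<Rightarrow> bool"

definition L2 :: "fn \<Rightarrow> bool" where
  "L2 f \<longleftrightarrow> f \<in> borel_measurable lborel \<and> integrable lborel (\<lambda>x. (cmod (f x))\<^sup>2)"

definition L2norm :: "fn \<Rightarrow> real" where
  "L2norm f = sqrt (LINT x|lborel. (cmod (f x))\<^sup>2)"

definition L2inner :: "fn \<Rightarrow> fn \<Rightarrow> complex" where
  "L2inner f g = (LINT x|lborel. cnj (f x) * g x)"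

definition L2_even :: "fn \<Rightarrow> bool" where
  "L2_even f \<longleftrightarrow> L2 f \<and> (AE x in lborel. f (- x) = f x)"

definition L2_odd :: "fn \<Rightarrow> bool" where
  "L2_odd f \<longleftrightarrow> L2 f \<and> (AE x in lborel. f (- x) = - f x)"

definition test_fun :: "fn \<Rightarrow> fn \<Rightarrow> bool" where
  "test_fun \<phi> \<phi>' \<longleftrightarrow> (\<forall>x. (\<phi> has_vector_derivative \<phi>' x) (at x)) \<and>
     continuous_on UNIV \<phi>' \<and> (\<exists>R. \<forall>x. \<bar>x\<bar> > R \<longrightarrow> \<phi> x = 0)"

definition weak_deriv :: "fn \<Rightarrow> fn \<Rightarrow> bool" where
  "weak_deriv f g \<longleftrightarrow> (\<forall>\<phi> \<phi>'. test_fun \<phi> \<phi>' \<longrightarrow>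
     (LINT x|lborel. f x * \<phi>' x) = - (LINT x|lborel. g x * \<phi> x))"

definition q_op :: oper where
  "q_op f g \<longleftrightarrow> L2 f \<and> L2 g \<and> (AE x in lborel. g x = complex_of_real x * f x)"

definition qinv_op :: oper where
  "qinv_op f g \<longleftrightarrow> L2 f \<and> L2 g \<and> (AE x in lborel. g x = f x / complex_of_real x)"

text \<open>p = -i d/dx on its natural (self-adjoint) domain H^1(R).\<close>
definition p_op :: oper where
  "p_op f g \<longleftrightarrow> L2 f \<and> L2 g \<and> weak_deriv f (\<lambda>x. \<i> * g x)"

text \<open>t = q^{-1} p with D(t) = {f in D(p). p f in D(q^{-1})}.\<close>
definition t_op :: oper where
  "t_op = p_op OO qinv_op"

definition t_adj :: oper where
  "t_adj g k \<longleftrightarrow> L2 g \<and> L2 k \<and>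
     (\<forall>f u. t_op f u \<longrightarrow> L2inner u g = L2inner f k)"

definition h_eps :: "real \<Rightarrow> oper" where
  "h_eps \<epsilon> f g \<longleftrightarrow> L2 g \<and> (\<exists>a b. (p_op OO p_op) f a \<and> (q_op OO q_op) f b \<and>
     (AE x in lborel. g x = (complex_of_real \<epsilon> * a x + b x) / 2))"

definition series_op :: "oper \<Rightarrow> real \<Rightarrow> oper" where
  "series_op T \<epsilon> f g \<longleftrightarrow> (\<exists>u L. (\<forall>n. (T ^^ (2*n+1)) f (u n)) \<and> L2 L \<and>
     (\<lambda>N. L2norm (\<lambda>x. (\<Sum>n\<le>N. complex_of_real ((-1)^n / real (2*n+1) * (sqrt \<epsilon>)^(2*n+1)) * u n x)
                     - L x)) \<longlonglongrightarrow> 0 \<and>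
     L2 g \<and> (AE x in lborel. g x = - complex_of_real (1 / sqrt \<epsilon>) * L x))"

definition S_eps :: "real \<Rightarrow> oper" where
  "S_eps \<epsilon> f g \<longleftrightarrow> L2_even f \<and> series_op t_op \<epsilon> f g"

definition S_star_eps :: "real \<Rightarrow> oper" where
  "S_star_eps \<epsilon> f g \<longleftrightarrow> L2_odd f \<and> series_op t_adj \<epsilon> f g"

text \<open>M_{eps,0} and M_{eps,1}: (complex) linear spans written out explicitly.\<close>
definition M_eps0 :: "real \<Rightarrow> fn set" where
  "M_eps0 \<epsilon> = {f. \<exists>F c. finite F \<and> (\<forall>(n,\<alpha>)\<in>F. 0 < \<alpha> \<and> \<alpha> < 1) \<and>
     f = (\<lambda>x. \<Sum>(n,\<alpha>)\<in>F. c (n,\<alpha>) * complex_of_real (x^(2*n) * exp (- \<alpha> * x\<^sup>2 / (2 * sqrt \<epsilon>))))}"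

definition M_eps1 :: "real \<Rightarrow> fn set" where
  "M_eps1 \<epsilon> = {f. \<exists>F c. finite F \<and> (\<forall>(n,\<alpha>)\<in>F. 0 < \<alpha> \<and> \<alpha> < 1) \<and>
     f = (\<lambda>x. \<Sum>(n,\<alpha>)\<in>F. c (n,\<alpha>) * complex_of_real (x^(2*n+1) * exp (- \<alpha> * x\<^sup>2 / (2 * sqrt \<epsilon>))))}"

end

theory Submission
  imports Defs "HOL-Probability.Probability" "HOL-Computational_Algebra.Polynomial"
begin

text \<open>Every element of \<open>M_eps0 \<epsilon>\<close> or \<open>M_eps1 \<epsilon>\<close> is a finite sum of Gaussian terms
  \<open>Q(x) e\<^sup>-\<^sup>a\<^sup>x\<^sup>2\<close> with \<open>a = \<alpha>/(2\<surd>\<epsilon>)\<close> and polynomials \<open>Q\<close> of fixed parity, and \<open>p\<close>, \<open>q\<close>,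
  \<open>q\<^sup>-\<^sup>1\<close>, \<open>t\<close>, \<open>t\<^sup>*\<close> and \<open>h\<^sub>\<epsilon>\<close> all act on such sums through linear maps of the polynomial
  factors. On these factors \<open>t\<close> (and \<open>t\<^sup>*\<close> on odd functions) is \<open>2ia\<close> times the identity
  plus a map lowering the degree by two, so its powers act on a finite-dimensional space
  with spectral radius \<open>2a\<close>; as \<open>2a\<surd>\<epsilon> = \<alpha> < 1\<close>, the series
  \<open>S\<^sub>\<epsilon> = -\<epsilon>\<^sup>-\<^sup>1\<^sup>/\<^sup>2 arctan(\<surd>\<epsilon> t)\<close> converges coefficientwise, hence in \<open>L\<^sup>2\<close>.
  The algebraic identity \<open>[h\<^sub>\<epsilon>, t] = i(1 + \<epsilon> t\<^sup>2)\<close> gives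
  \<open>[h\<^sub>\<epsilon>, t\<^sup>2\<^sup>n\<^sup>+\<^sup>1] = (2n+1) i t\<^sup>2\<^sup>n (1 + \<epsilon> t\<^sup>2)\<close>, so the commutator of \<open>h\<^sub>\<epsilon>\<close> with the
  \<open>N\<close>-th partial sum of the arctan series telescopes to
  \<open>i\<surd>\<epsilon> (1 + (-1)\<^sup>N \<epsilon>\<^sup>N\<^sup>+\<^sup>1 t\<^sup>2\<^sup>N\<^sup>+\<^sup>2)\<close>, whose remainder tends to zero.
  That \<open>t\<^sup>*\<close> acts on odd Gaussian sums as \<open>p q\<^sup>-\<^sup>1\<close> rests on the symmetry
  \<open>\<langle>p f, \<psi>\<rangle> = \<langle>f, p \<psi>\<rangle>\<close> for \<open>f \<in> D(p)\<close> and smooth \<open>L\<^sup>2\<close> functions \<open>\<psi>\<close> with \<open>L\<^sup>2\<close>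
  derivative, proved by cutting \<open>\<psi>\<close> off to test functions.\<close>

section \<open>Gaussian sums\<close>

definition gauss_term :: "real \<Rightarrow> complex poly \<Rightarrow> real \<Rightarrow> complex" where
  "gauss_term a Q x = poly Q (complex_of_real x) * complex_of_real (exp (- a * x\<^sup>2))"

definition gauss_sum :: "'i set \<Rightarrow> ('i \<Rightarrow> real) \<Rightarrow> ('i \<Rightarrow> complex poly) \<Rightarrow> real \<Rightarrow> complex" where
  "gauss_sum I r P x = (\<Sum>i\<in>I. gauss_term (r i) (P i) x)"

definition gauss_deriv :: "real \<Rightarrow> complex poly \<Rightarrow> complex poly" where
  "gauss_deriv a Q = pderiv Q - smult (complex_of_real (2*a)) (pCons 0 Q)"

lemma gauss_term_has_vector_derivative:
  "(gauss_term a Q has_vector_derivative gauss_term a (gauss_deriv a Q) x) (at x)"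
proof -
  have poly: "((\<lambda>x. poly Q (complex_of_real x)) has_vector_derivative
      poly (pderiv Q) (complex_of_real x)) (at x)"
    by (rule has_vector_derivative_real_field[OF poly_DERIV])
  have gauss: "((\<lambda>x. complex_of_real (exp (- a * x\<^sup>2))) has_vector_derivative
      complex_of_real (exp (- a * x\<^sup>2) * (- (2 * a * x)))) (at x)"
    by (rule has_vector_derivative_of_real) (auto intro!: derivative_eq_intros)
  show ?thesis
    using has_vector_derivative_mult[OF poly gauss]
    by (simp add: gauss_term_def[abs_def] gauss_deriv_def algebra_simps)
qed

lemma gauss_sum_has_vector_derivative:
  "(gauss_sum I r P has_vector_derivative gauss_sum I r (\<lambda>i. gauss_deriv (r i) (P i)) x) (at x)"
  unfolding gauss_sum_def[abs_def]
  by (rule has_vector_derivative_sum) (rule gauss_term_has_vector_derivative)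

lemma continuous_on_gauss_sum: "continuous_on UNIV (gauss_sum I r P)"
  by (metis continuous_at_imp_continuous_on gauss_sum_has_vector_derivative
      has_vector_derivative_continuous)

lemma borel_measurable_gauss_sum: "gauss_sum I r P \<in> borel_measurable lborel"
  using borel_measurable_continuous_onI[OF continuous_on_gauss_sum] by simp

lemma gauss_sum_smult: "gauss_sum I r (\<lambda>i. smult c (P i)) x = c * gauss_sum I r P x"
  by (simp add: gauss_sum_def gauss_term_def sum_distrib_left mult.assoc)

lemma gauss_sum_minus: "gauss_sum I r (\<lambda>i. - P i) x = - gauss_sum I r P x"
  by (simp add: gauss_sum_def gauss_term_def sum_negf)

lemma gauss_sum_add: "gauss_sum I r (\<lambda>i. P i + Q i) x = gauss_sum I r P x + gauss_sum I r Q x"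
  by (simp add: gauss_sum_def gauss_term_def sum.distrib algebra_simps)

lemma gauss_sum_diff: "gauss_sum I r (\<lambda>i. P i - Q i) x = gauss_sum I r P x - gauss_sum I r Q x"
  by (simp add: gauss_sum_def gauss_term_def sum_subtractf algebra_simps)

lemma gauss_sum_sum:
  "gauss_sum I r (\<lambda>i. \<Sum>n\<in>N. P n i) x = (\<Sum>n\<in>N. gauss_sum I r (P n) x)"
  by (simp add: gauss_sum_def gauss_term_def poly_sum sum_distrib_right sum.swap[of _ I])

lemma gauss_sum_pCons: "gauss_sum I r (\<lambda>i. pCons 0 (P i)) x = complex_of_real x * gauss_sum I r P x"
  by (simp add: gauss_sum_def gauss_term_def sum_distrib_left mult.assoc)

lemma pCons_0_poly_shift_1: "coeff Q 0 = 0 \<Longrightarrow> pCons 0 (poly_shift (Suc 0) Q) = Q"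
  by (rule poly_eqI) (auto simp: coeff_pCons coeff_poly_shift split: nat.split)

lemma gauss_sum_eq_mult_poly_shift:
  assumes "\<forall>i\<in>I. coeff (P i) 0 = 0"
  shows "gauss_sum I r P x = complex_of_real x * gauss_sum I r (\<lambda>i. poly_shift 1 (P i)) x"
proof -
  have "gauss_sum I r P x = gauss_sum I r (\<lambda>i. pCons 0 (poly_shift 1 (P i))) x"
    unfolding gauss_sum_def using assms by (auto intro!: sum.cong simp: pCons_0_poly_shift_1)
  then show ?thesis by (simp add: gauss_sum_pCons)
qed

subsection \<open>Square integrability\<close>

lemma poly_altdef_le:
  assumes "degree (Q::complex poly) \<le> d"
  shows "poly Q z = (\<Sum>k\<le>d. coeff Q k * z^k)"
proof -
  have "poly Q z = poly (\<Sum>i\<le>d. monom (coeff Q i) i) z"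
    using assms by (simp add: poly_as_sum_of_monoms')
  then show ?thesis by (simp add: poly_sum poly_monom)
qed

lemma norm_poly_sq_le:
  assumes "degree Q \<le> d"
  shows "(cmod (poly Q (complex_of_real x)))\<^sup>2
    \<le> real (Suc d) * (\<Sum>k\<le>d. (cmod (coeff Q k))\<^sup>2 * \<bar>x\<bar>^(2*k))"
proof -
  have "cmod (poly Q (complex_of_real x)) \<le> (\<Sum>k\<le>d. cmod (coeff Q k) * \<bar>x\<bar>^k)"
    unfolding poly_altdef_le[OF assms]
    by (rule order.trans[OF norm_sum]) (simp add: norm_mult norm_power)
  then have "(cmod (poly Q (complex_of_real x)))\<^sup>2 \<le> (\<Sum>k\<le>d. cmod (coeff Q k) * \<bar>x\<bar>^k)\<^sup>2"
    by (simp add: power_mono)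
  also have "\<dots> \<le> (\<Sum>k\<le>d. (cmod (coeff Q k) * \<bar>x\<bar>^k)\<^sup>2) * real (card {..d})"
    by (rule sum_squared_le_sum_of_squares)
  also have "\<dots> = real (Suc d) * (\<Sum>k\<le>d. (cmod (coeff Q k))\<^sup>2 * \<bar>x\<bar>^(2*k))"
    by (simp add: power_mult_distrib power_mult[symmetric] mult.commute)
  finally show ?thesis .
qed

definition gauss_sum_bound ::
    "'i set \<Rightarrow> ('i \<Rightarrow> real) \<Rightarrow> nat \<Rightarrow> ('i \<Rightarrow> complex poly) \<Rightarrow> real \<Rightarrow> real" where
  "gauss_sum_bound I r d P x = real (card I) * real (Suc d) *
     (\<Sum>i\<in>I. \<Sum>k\<le>d. (cmod (coeff (P i) k))\<^sup>2 * (\<bar>x\<bar>^(2*k) * exp (- (2 * r i * x\<^sup>2))))"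

lemma norm_gauss_term_sq_le:
  assumes "degree Q \<le> d"
  shows "(cmod (gauss_term a Q x))\<^sup>2
    \<le> real (Suc d) * (\<Sum>k\<le>d. (cmod (coeff Q k))\<^sup>2 * (\<bar>x\<bar>^(2*k) * exp (- (2 * a * x\<^sup>2))))"
proof -
  have "(exp (- (a * x\<^sup>2)))\<^sup>2 = exp (- (2 * a * x\<^sup>2))"
    by (simp add: power2_eq_square exp_add[symmetric])
  then have "(cmod (gauss_term a Q x))\<^sup>2
      = (cmod (poly Q (complex_of_real x)))\<^sup>2 * exp (- (2 * a * x\<^sup>2))"
    by (simp add: gauss_term_def norm_mult power_mult_distrib)
  also have "\<dots> \<le> real (Suc d) * (\<Sum>k\<le>d. (cmod (coeff Q k))\<^sup>2 * \<bar>x\<bar>^(2*k)) * exp (- (2 * a * x\<^sup>2))"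
    by (rule mult_right_mono[OF norm_poly_sq_le[OF assms]]) simp
  finally show ?thesis
    by (simp add: sum_distrib_right mult.assoc)
qed

lemma norm_gauss_sum_sq_le:
  assumes "\<forall>i\<in>I. degree (P i) \<le> d"
  shows "(cmod (gauss_sum I r P x))\<^sup>2 \<le> gauss_sum_bound I r d P x"
proof -
  have "(cmod (gauss_sum I r P x))\<^sup>2 \<le> (\<Sum>i\<in>I. cmod (gauss_term (r i) (P i) x))\<^sup>2"
    unfolding gauss_sum_def by (intro power_mono norm_sum) simp
  also have "\<dots> \<le> (\<Sum>i\<in>I. (cmod (gauss_term (r i) (P i) x))\<^sup>2) * real (card I)"
    by (rule sum_squared_le_sum_of_squares)
  also have "\<dots> \<le> (\<Sum>i\<in>I. real (Suc d) * (\<Sum>k\<le>d. (cmod (coeff (P i) k))\<^sup>2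
      * (\<bar>x\<bar>^(2*k) * exp (- (2 * r i * x\<^sup>2))))) * real (card I)"
    by (intro mult_right_mono sum_mono norm_gauss_term_sq_le) (use assms in auto)
  finally show ?thesis
    by (simp add: gauss_sum_bound_def sum_distrib_left mult_ac)
qed

lemma integrable_abs_power_gaussian:
  fixes b :: real
  assumes "b > 0"
  shows "integrable lborel (\<lambda>x. \<bar>x\<bar>^n * exp (- (b * x\<^sup>2)))"
proof -
  define \<sigma> where "\<sigma> = 1 / sqrt (2*b)"
  have \<sigma>: "\<sigma> > 0" "2 * \<sigma>\<^sup>2 = 1 / b"
    using assms by (simp_all add: \<sigma>_def power_divide)
  have "integrable lborel (\<lambda>x. sqrt (2 * pi * \<sigma>\<^sup>2) * (normal_density 0 \<sigma> x * \<bar>x - 0\<bar>^n))"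
    by (intro integrable_mult_right integrable_normal_moment_abs \<sigma>)
  also have "(\<lambda>x. sqrt (2 * pi * \<sigma>\<^sup>2) * (normal_density 0 \<sigma> x * \<bar>x - 0\<bar>^n))
      = (\<lambda>x. \<bar>x\<bar>^n * exp (- (b * x\<^sup>2)))"
    using \<sigma> assms by (simp add: fun_eq_iff normal_density_def field_simps)
  finally show ?thesis .
qed

lemma integrable_gauss_sum_bound:
  "\<forall>i\<in>I. r i > 0 \<Longrightarrow> integrable lborel (gauss_sum_bound I r d P)"
  unfolding gauss_sum_bound_def[abs_def]
  by (auto intro!: integrable_mult_right Bochner_Integration.integrable_sum
      integrable_abs_power_gaussian)

lemma integral_gauss_sum_bound:
  assumes "\<forall>i\<in>I. r i > 0"
  shows "(LINT x|lborel. gauss_sum_bound I r d P x) = real (card I) * real (Suc d) *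
    (\<Sum>i\<in>I. \<Sum>k\<le>d. (cmod (coeff (P i) k))\<^sup>2 * (LINT x|lborel. \<bar>x\<bar>^(2*k) * exp (- (2 * r i * x\<^sup>2))))"
  using assms unfolding gauss_sum_bound_def
  by (simp add: Bochner_Integration.integral_sum integrable_mult_right
      integrable_abs_power_gaussian Bochner_Integration.integrable_sum)

lemma L2_gauss_sum:
  assumes "finite I" "\<forall>i\<in>I. r i > 0"
  shows "L2 (gauss_sum I r P)"
  unfolding L2_def
proof (intro conjI borel_measurable_gauss_sum)
  define d where "d = (\<Sum>i\<in>I. degree (P i))"
  have "\<forall>i\<in>I. degree (P i) \<le> d"
    using assms(1) by (auto simp: d_def intro: member_le_sum)
  moreover have "(\<lambda>x. (cmod (gauss_sum I r P x))\<^sup>2) \<in> borel_measurable lborel"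
    using borel_measurable_gauss_sum by measurable
  ultimately show "integrable lborel (\<lambda>x. (cmod (gauss_sum I r P x))\<^sup>2)"
    by (intro Bochner_Integration.integrable_bound[OF integrable_gauss_sum_bound[OF assms(2)]])
      (auto intro!: AE_I2 order.trans[OF _ abs_ge_self] norm_gauss_sum_sq_le)
qed

lemma L2norm_gauss_sum_tendsto_0:
  assumes fin: "finite I" and pos: "\<forall>i\<in>I. r i > 0"
    and deg: "\<And>N i. i \<in> I \<Longrightarrow> degree (E N i) \<le> d"
    and coeff: "\<And>i k. i \<in> I \<Longrightarrow> (\<lambda>N. coeff (E N i) k) \<longlonglongrightarrow> 0"
  shows "(\<lambda>N. L2norm (gauss_sum I r (E N))) \<longlonglongrightarrow> 0"
proof (rule Lim_null_comparison)
  define G where "G N = (LINT x|lborel. gauss_sum_bound I r d (E N) x)" for N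
  have "(LINT x|lborel. (cmod (gauss_sum I r (E N) x))\<^sup>2) \<le> G N" for N
    unfolding G_def using L2_gauss_sum[OF fin pos] deg
    by (intro integral_mono integrable_gauss_sum_bound[OF pos] norm_gauss_sum_sq_le)
      (auto simp: L2_def)
  then show "\<forall>\<^sub>F N in sequentially. norm (L2norm (gauss_sum I r (E N))) \<le> sqrt (G N)"
    by (simp add: L2norm_def real_sqrt_le_mono)
  have "G \<longlonglongrightarrow> real (card I) * real (Suc d) * (\<Sum>i\<in>I. \<Sum>k\<le>d. (cmod 0)\<^sup>2 *
      (LINT x|lborel. \<bar>x\<bar>^(2*k) * exp (- (2 * r i * x\<^sup>2))))"
    unfolding G_def integral_gauss_sum_bound[OF pos] by (intro tendsto_intros coeff) auto
  then show "(\<lambda>N. sqrt (G N)) \<longlonglongrightarrow> 0"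
    using tendsto_real_sqrt by fastforce
qed

section \<open>The operators on Gaussian sums\<close>

lemma integrable_continuous_vanishing_outside:
  fixes g :: "real \<Rightarrow> complex"
  assumes "continuous_on UNIV g" "\<And>x. \<bar>x\<bar> > c \<Longrightarrow> g x = 0"
  shows "integrable lborel g"
proof -
  have "integrable lborel (\<lambda>x. indicat_real {-c..c} x *\<^sub>R g x)"
    by (rule borel_integrable_compact) (auto intro: continuous_on_subset[OF assms(1)])
  moreover have "(\<lambda>x. indicat_real {-c..c} x *\<^sub>R g x) = g"
    using assms(2) by (force simp: fun_eq_iff indicator_def abs_le_iff)
  ultimately show ?thesis by simp
qed

lemma test_fun_vanishing_outside:
  assumes "test_fun \<phi> \<phi>'"
  obtains R where "R \<ge> 0" "\<And>x. \<bar>x\<bar> > R \<Longrightarrow> \<phi> x = 0" "\<And>x. \<bar>x\<bar> > R \<Longrightarrow> \<phi>' x = 0"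
proof -
  from assms obtain R0 where R0: "\<forall>x. \<bar>x\<bar> > R0 \<longrightarrow> \<phi> x = 0" unfolding test_fun_def by blast
  define R where "R = \<bar>R0\<bar>"
  have \<phi>: "\<phi> x = 0" if "\<bar>x\<bar> > R" for x using R0 that by (auto simp: R_def)
  have "\<phi>' x = 0" if x: "\<bar>x\<bar> > R" for x
  proof -
    have "((\<lambda>_. 0) has_vector_derivative 0) (at x)" by (rule has_vector_derivative_const)
    then have "(\<phi> has_vector_derivative 0) (at x)"
      by (rule has_vector_derivative_transform_within_open[of _ _ _ "{y. \<bar>y\<bar> > R}"])
        (use x \<phi> in \<open>auto intro!: open_Collect_less continuous_intros\<close>)
    moreover have "(\<phi> has_vector_derivative \<phi>' x) (at x)"
      using assms unfolding test_fun_def by blast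
    ultimately show ?thesis using vector_derivative_unique_at by blast
  qed
  then show ?thesis using that[of R] \<phi> by (auto simp: R_def)
qed

lemma weak_deriv_C1:
  fixes f f' :: "real \<Rightarrow> complex"
  assumes f': "\<And>x. (f has_vector_derivative f' x) (at x)" and cont: "continuous_on UNIV f'"
  shows "weak_deriv f f'"
  unfolding weak_deriv_def
proof (intro allI impI)
  fix \<phi> \<phi>' assume test: "test_fun \<phi> \<phi>'"
  obtain R where R: "R \<ge> 0" "\<And>x. \<bar>x\<bar> > R \<Longrightarrow> \<phi> x = 0" "\<And>x. \<bar>x\<bar> > R \<Longrightarrow> \<phi>' x = 0"
    using test_fun_vanishing_outside[OF test] by blast
  have \<phi>': "\<And>x. (\<phi> has_vector_derivative \<phi>' x) (at x)" and cont': "continuous_on UNIV \<phi>'"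
    using test unfolding test_fun_def by auto
  have cont_f: "continuous_on UNIV f" and cont_\<phi>: "continuous_on UNIV \<phi>"
    by (metis continuous_at_imp_continuous_on f' \<phi>' has_vector_derivative_continuous)+
  have int1: "integrable lborel (\<lambda>x. f x * \<phi>' x)"
    by (rule integrable_continuous_vanishing_outside[OF continuous_on_mult[OF cont_f cont'], of R])
      (use R in simp)
  have int2: "integrable lborel (\<lambda>x. f' x * \<phi> x)"
    by (rule integrable_continuous_vanishing_outside[OF continuous_on_mult[OF cont cont_\<phi>], of R])
      (use R in simp)
  define F' where "F' x = f x * \<phi>' x + f' x * \<phi> x" for x
  have F': "((\<lambda>x. f x * \<phi> x) has_vector_derivative F' x) (at x within {-R-1..R+1})" for x
    unfolding F'_def
    by (rule has_vector_derivative_at_within, rule has_vector_derivative_mult[OF f' \<phi>'])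
  have "(F' has_integral (f (R+1) * \<phi> (R+1) - f (-R-1) * \<phi> (-R-1))) {-R-1..R+1}"
    by (rule fundamental_theorem_of_calculus) (use R F' in auto)
  moreover have "\<phi> (R+1) = 0" "\<phi> (-R-1) = 0" using R by auto
  ultimately have "(F' has_integral 0) {-R-1..R+1}" by simp
  then have "(F' has_integral 0) UNIV"
    by (rule has_integral_on_superset) (use R in \<open>auto simp: F'_def\<close>)
  moreover have "(F' has_integral integral\<^sup>L lborel F') UNIV"
    using int1 int2 unfolding F'_def by (intro has_integral_integral_lborel) simp
  ultimately have "integral\<^sup>L lborel F' = 0" using has_integral_unique by blast
  then have "(LINT x|lborel. f x * \<phi>' x) + (LINT x|lborel. f' x * \<phi> x) = 0"
    unfolding F'_def using int1 int2 by simp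
  then show "(LINT x|lborel. f x * \<phi>' x) = - (LINT x|lborel. f' x * \<phi> x)"
    by (simp add: eq_neg_iff_add_eq_0)
qed

lemma gauss_deriv_smult: "gauss_deriv a (smult c Q) = smult c (gauss_deriv a Q)"
  by (simp add: gauss_deriv_def pderiv_smult smult_diff_right mult.commute)

lemma gauss_deriv_minus: "gauss_deriv a (- Q) = - gauss_deriv a Q"
  by (simp add: gauss_deriv_def pderiv_minus)

lemma coeff_gauss_deriv:
  "coeff (gauss_deriv a Q) k = of_nat (Suc k) * coeff Q (Suc k)
     - complex_of_real (2*a) * (case k of 0 \<Rightarrow> 0 | Suc j \<Rightarrow> coeff Q j)"
  by (simp add: gauss_deriv_def coeff_pderiv coeff_pCons split: nat.split)

lemma p_op_gauss_sum:
  assumes "finite I" "\<forall>i\<in>I. r i > 0"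
  shows "p_op (gauss_sum I r P) (gauss_sum I r (\<lambda>i. smult (-\<i>) (gauss_deriv (r i) (P i))))"
  unfolding p_op_def
proof (intro conjI L2_gauss_sum assms)
  have "(\<lambda>x. \<i> * gauss_sum I r (\<lambda>i. smult (-\<i>) (gauss_deriv (r i) (P i))) x)
      = gauss_sum I r (\<lambda>i. gauss_deriv (r i) (P i))"
    by (simp add: gauss_sum_smult gauss_sum_minus fun_eq_iff)
  then show "weak_deriv (gauss_sum I r P)
      (\<lambda>x. \<i> * gauss_sum I r (\<lambda>i. smult (-\<i>) (gauss_deriv (r i) (P i))) x)"
    using weak_deriv_C1[OF gauss_sum_has_vector_derivative continuous_on_gauss_sum] by simp
qed

lemma q_op_gauss_sum:
  assumes "finite I" "\<forall>i\<in>I. r i > 0"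
  shows "q_op (gauss_sum I r P) (gauss_sum I r (\<lambda>i. pCons 0 (P i)))"
  unfolding q_op_def by (simp add: L2_gauss_sum assms gauss_sum_pCons)

lemma qinv_op_gauss_sum:
  assumes "finite I" "\<forall>i\<in>I. r i > 0" "\<forall>i\<in>I. coeff (P i) 0 = 0"
  shows "qinv_op (gauss_sum I r P) (gauss_sum I r (\<lambda>i. poly_shift 1 (P i)))"
  unfolding qinv_op_def
proof (intro conjI L2_gauss_sum assms)
  show "AE x in lborel. gauss_sum I r (\<lambda>i. poly_shift 1 (P i)) x = gauss_sum I r P x / complex_of_real x"
    using AE_lborel_singleton[of 0]
    by eventually_elim (simp add: gauss_sum_eq_mult_poly_shift[OF assms(3)])
qed

definition even_poly :: "complex poly \<Rightarrow> bool" where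
  "even_poly Q \<longleftrightarrow> (\<forall>k. odd k \<longrightarrow> coeff Q k = 0)"

definition odd_poly :: "complex poly \<Rightarrow> bool" where
  "odd_poly Q \<longleftrightarrow> (\<forall>k. even k \<longrightarrow> coeff Q k = 0)"

lemma poly_minus_even_poly: "even_poly Q \<Longrightarrow> poly Q (-z) = poly Q z"
  unfolding poly_altdef even_poly_def
  by (intro sum.cong refl) (metis mult_zero_left power_minus_even)

lemma poly_minus_odd_poly: "odd_poly Q \<Longrightarrow> poly Q (-z) = - poly Q z"
  unfolding poly_altdef odd_poly_def sum_negf[symmetric]
  by (intro sum.cong refl) (metis mult_zero_left minus_zero mult_minus_right power_minus_odd)

lemma L2_even_gauss_sum:
  assumes "finite I" "\<forall>i\<in>I. r i > 0" "\<forall>i\<in>I. even_poly (P i)"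
  shows "L2_even (gauss_sum I r P)"
  unfolding L2_even_def using assms
  by (auto intro!: L2_gauss_sum AE_I2 sum.cong simp: gauss_sum_def gauss_term_def poly_minus_even_poly)

lemma L2_odd_gauss_sum:
  assumes "finite I" "\<forall>i\<in>I. r i > 0" "\<forall>i\<in>I. odd_poly (P i)"
  shows "L2_odd (gauss_sum I r P)"
  unfolding L2_odd_def using assms
  by (auto intro!: L2_gauss_sum AE_I2
      simp: gauss_sum_def gauss_term_def poly_minus_odd_poly sum_negf[symmetric])

definition qinv_p_poly :: "real \<Rightarrow> complex poly \<Rightarrow> complex poly" where
  "qinv_p_poly a Q = poly_shift 1 (smult (-\<i>) (gauss_deriv a Q))"

definition p_qinv_poly :: "real \<Rightarrow> complex poly \<Rightarrow> complex poly" where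
  "p_qinv_poly a Q = smult (-\<i>) (gauss_deriv a (poly_shift 1 Q))"

lemma coeff_qinv_p_poly:
  "coeff (qinv_p_poly a Q) k = -\<i> * (of_nat (k+2) * coeff Q (k+2) - complex_of_real (2*a) * coeff Q k)"
  by (simp add: qinv_p_poly_def coeff_poly_shift coeff_gauss_deriv)

lemma coeff_p_qinv_poly:
  "coeff Q 0 = 0 \<Longrightarrow>
    coeff (p_qinv_poly a Q) k = -\<i> * (of_nat (k+1) * coeff Q (k+2) - complex_of_real (2*a) * coeff Q k)"
  by (cases k) (simp_all add: p_qinv_poly_def coeff_poly_shift coeff_gauss_deriv)

lemma even_poly_qinv_p_poly: "even_poly Q \<Longrightarrow> even_poly (qinv_p_poly a Q)"
  by (simp add: even_poly_def coeff_qinv_p_poly)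

lemma odd_poly_p_qinv_poly: "odd_poly Q \<Longrightarrow> odd_poly (p_qinv_poly a Q)"
  by (simp add: odd_poly_def coeff_p_qinv_poly)

lemma t_op_gauss_sum:
  assumes "finite I" "\<forall>i\<in>I. r i > 0" "\<forall>i\<in>I. even_poly (P i)"
  shows "t_op (gauss_sum I r P) (gauss_sum I r (\<lambda>i. qinv_p_poly (r i) (P i)))"
  unfolding t_op_def
proof (rule relcomppI)
  show "p_op (gauss_sum I r P) (gauss_sum I r (\<lambda>i. smult (-\<i>) (gauss_deriv (r i) (P i))))"
    by (rule p_op_gauss_sum[OF assms(1,2)])
  have "\<forall>i\<in>I. coeff (smult (-\<i>) (gauss_deriv (r i) (P i))) 0 = 0"
    using assms(3) by (simp add: coeff_gauss_deriv even_poly_def)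
  then show "qinv_op (gauss_sum I r (\<lambda>i. smult (-\<i>) (gauss_deriv (r i) (P i))))
      (gauss_sum I r (\<lambda>i. qinv_p_poly (r i) (P i)))"
    unfolding qinv_p_poly_def by (rule qinv_op_gauss_sum[OF assms(1,2)])
qed

definition osc_poly :: "real \<Rightarrow> real \<Rightarrow> complex poly \<Rightarrow> complex poly" where
  "osc_poly e a Q =
     smult (1/2) (smult (- complex_of_real e) (gauss_deriv a (gauss_deriv a Q)) + pCons 0 (pCons 0 Q))"

lemma h_eps_gauss_sum:
  assumes "finite I" "\<forall>i\<in>I. r i > 0"
  shows "h_eps e (gauss_sum I r P) (gauss_sum I r (\<lambda>i. osc_poly e (r i) (P i)))"
  unfolding h_eps_def
proof (intro conjI L2_gauss_sum assms exI)
  let ?pp = "gauss_sum I r (\<lambda>i. smult (-\<i>) (gauss_deriv (r i) (smult (-\<i>) (gauss_deriv (r i) (P i)))))"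
  let ?qq = "gauss_sum I r (\<lambda>i. pCons 0 (pCons 0 (P i)))"
  show "(p_op OO p_op) (gauss_sum I r P) ?pp"
    by (rule relcomppI, rule p_op_gauss_sum[OF assms], rule p_op_gauss_sum[OF assms])
  show "(q_op OO q_op) (gauss_sum I r P) ?qq"
    by (rule relcomppI, rule q_op_gauss_sum[OF assms], rule q_op_gauss_sum[OF assms])
  show "AE x in lborel.
      gauss_sum I r (\<lambda>i. osc_poly e (r i) (P i)) x = (complex_of_real e * ?pp x + ?qq x) / 2"
    by (rule AE_I2)
      (simp add: osc_poly_def gauss_sum_smult gauss_sum_add gauss_sum_diff gauss_sum_minus
        gauss_deriv_smult gauss_deriv_minus)
qed

section \<open>Symmetry of \<open>p\<close> against smooth functions\<close>

lemma pos_part_sq_has_real_derivative: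
  "((\<lambda>u. (max 0 u)\<^sup>2) has_real_derivative 2 * max 0 u) (at u)"
proof (cases u "0::real" rule: linorder_cases)
  case less
  have "((\<lambda>u. 0) has_real_derivative 0) (at u)" by simp
  then have "((\<lambda>u. (max 0 u)\<^sup>2) has_real_derivative 0) (at u)"
    by (rule has_field_derivative_transform_within_open[of _ _ _ "{..<0}"]) (use less in auto)
  with less show ?thesis by simp
next
  case greater
  have "((\<lambda>u. u\<^sup>2) has_real_derivative 2 * u) (at u)" by (auto intro!: derivative_eq_intros)
  then have "((\<lambda>u. (max 0 u)\<^sup>2) has_real_derivative 2 * u) (at u)"
    by (rule has_field_derivative_transform_within_open[of _ _ _ "{0<..}"]) (use greater in auto)
  with greater show ?thesis by simp
next
  case equal
  have "((\<lambda>y::real. ((max 0 y)\<^sup>2 - (max 0 0)\<^sup>2) / (y - 0)) \<longlongrightarrow> 0) (at 0)"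
  proof (rule Lim_null_comparison)
    have "norm (((max 0 y)\<^sup>2 - (max 0 0)\<^sup>2) / (y - 0)) \<le> \<bar>y\<bar>" for y :: real
      by (cases "y > 0") (simp_all add: power2_eq_square)
    then show "\<forall>\<^sub>F y in at 0. norm (((max 0 y)\<^sup>2 - (max 0 0)\<^sup>2) / (y - 0)) \<le> \<bar>y\<bar>" by simp
    show "((\<lambda>y. \<bar>y\<bar>) \<longlongrightarrow> 0) (at (0::real))"
      by (intro tendsto_rabs_zero tendsto_ident_at)
  qed
  then show ?thesis using equal by (simp add: has_field_derivative_iff)
qed

definition cutoff :: "real \<Rightarrow> real" where
  "cutoff y = (max 0 (1 - y\<^sup>2))\<^sup>2"

definition cutoff' :: "real \<Rightarrow> real" where
  "cutoff' y = 2 * max 0 (1 - y\<^sup>2) * (- 2 * y)"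

lemma cutoff_has_real_derivative: "(cutoff has_real_derivative cutoff' y) (at y)"
  unfolding cutoff_def[abs_def] cutoff'_def
  by (rule DERIV_chain2[OF pos_part_sq_has_real_derivative]) (auto intro!: derivative_eq_intros)

lemma isCont_cutoff: "isCont cutoff y"
  using cutoff_has_real_derivative DERIV_isCont by blast

lemma continuous_on_cutoff': "continuous_on UNIV cutoff'"
  unfolding cutoff'_def[abs_def] by (intro continuous_intros)

lemma cutoff_0 [simp]: "cutoff 0 = 1"
  by (simp add: cutoff_def)

lemma abs_cutoff_le_1: "\<bar>cutoff y\<bar> \<le> 1"
  unfolding cutoff_def by (simp add: power_le_one)

lemma abs_cutoff'_le_4: "\<bar>cutoff' y\<bar> \<le> 4"
proof (cases "y\<^sup>2 \<le> 1")
  case True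
  then have "\<bar>y\<bar> \<le> 1" by (simp add: abs_square_le_1)
  then have "(1 - y\<^sup>2) * \<bar>y\<bar> \<le> 1 * 1"
    using True by (intro mult_mono) auto
  moreover have "\<bar>cutoff' y\<bar> = 4 * ((1 - y\<^sup>2) * \<bar>y\<bar>)"
    using True by (simp add: cutoff'_def abs_mult)
  ultimately show ?thesis by simp
next
  case False then show ?thesis by (simp add: cutoff'_def)
qed

lemma cutoff_eq_0: "1 < \<bar>y\<bar> \<Longrightarrow> cutoff y = 0"
  using one_less_power[of "\<bar>y\<bar>" 2] by (simp add: cutoff_def)

lemma test_fun_cutoff_mult:
  fixes g g' :: "real \<Rightarrow> complex"
  assumes g': "\<And>x. (g has_vector_derivative g' x) (at x)" and cont: "continuous_on UNIV g'"
    and "N > 0"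
  shows "test_fun (\<lambda>x. complex_of_real (cutoff (x / N)) * g x)
    (\<lambda>x. complex_of_real (cutoff' (x / N) / N) * g x + complex_of_real (cutoff (x / N)) * g' x)"
  unfolding test_fun_def
proof (intro conjI allI impI exI)
  fix x
  have "((\<lambda>x. cutoff (x / N)) has_real_derivative cutoff' (x / N) * (1 / N)) (at x)"
    by (rule DERIV_chain2[OF cutoff_has_real_derivative])
      (use \<open>N > 0\<close> in \<open>auto intro!: derivative_eq_intros\<close>)
  from has_vector_derivative_mult[OF has_vector_derivative_of_real[OF this] g']
  show "((\<lambda>x. complex_of_real (cutoff (x / N)) * g x) has_vector_derivative
      complex_of_real (cutoff' (x / N) / N) * g x + complex_of_real (cutoff (x / N)) * g' x) (at x)"
    by (simp add: algebra_simps)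
next
  have cont_g: "continuous_on UNIV g"
    by (metis continuous_at_imp_continuous_on g' has_vector_derivative_continuous)
  have div: "continuous_on UNIV (\<lambda>x::real. x / N)"
    using \<open>N > 0\<close> by (intro continuous_intros) auto
  have cont_cutoff': "continuous_on UNIV (\<lambda>x. cutoff' (x / N))"
    by (rule continuous_on_compose2[OF continuous_on_cutoff' div]) auto
  have cont_cutoff: "continuous_on UNIV (\<lambda>x. cutoff (x / N))"
    using isCont_cutoff
    by (intro continuous_on_compose2[OF continuous_at_imp_continuous_on div]) auto
  show "continuous_on UNIV
      (\<lambda>x. complex_of_real (cutoff' (x / N) / N) * g x + complex_of_real (cutoff (x / N)) * g' x)"
    by (intro continuous_on_add continuous_on_mult continuous_on_of_real continuous_on_divide
        continuous_on_const cont_cutoff' cont_cutoff cont_g cont) (use \<open>N > 0\<close> in auto)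
next
  fix x assume "N < \<bar>x\<bar>"
  then have "1 < \<bar>x / N\<bar>" using \<open>N > 0\<close> by (simp add: abs_divide)
  then show "complex_of_real (cutoff (x / N)) * g x = 0" by (simp add: cutoff_eq_0)
qed

lemma borel_measurable_cnj [measurable]:
  "f \<in> borel_measurable M \<Longrightarrow> (\<lambda>x. cnj (f x)) \<in> borel_measurable M"
  by (rule measurable_compose[OF _ borel_measurable_continuous_onI[OF continuous_on_cnj[OF continuous_on_id]]])

lemma cutoff_rescaled_tendsto: "(\<lambda>n. cutoff (x / Suc n)) \<longlonglongrightarrow> 1"
  using isCont_tendsto_compose[OF isCont_cutoff tendsto_mult_right_zero[OF LIMSEQ_inverse_real_of_nat, of x]]
  by (simp add: divide_inverse)

lemma cutoff'_rescaled_tendsto: "(\<lambda>n. cutoff' (x / Suc n) / Suc n) \<longlonglongrightarrow> 0"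
proof (rule Lim_null_comparison)
  show "\<forall>\<^sub>F n in sequentially. norm (cutoff' (x / Suc n) / Suc n) \<le> 4 * inverse (real (Suc n))"
    using abs_cutoff'_le_4 by (simp add: divide_inverse abs_mult mult_right_mono)
  show "(\<lambda>n. 4 * inverse (real (Suc n))) \<longlonglongrightarrow> 0"
    using tendsto_mult_right_zero[OF LIMSEQ_inverse_real_of_nat] by simp
qed

lemma norm_cutoff_combination_le:
  "norm (complex_of_real (cutoff' (x / Suc n) / Suc n) * u + complex_of_real (cutoff (x / Suc n)) * v)
    \<le> 4 * cmod u + cmod v"
proof -
  have "\<bar>cutoff' (x / Suc n)\<bar> / Suc n \<le> \<bar>cutoff' (x / Suc n)\<bar> / 1"
    by (rule divide_left_mono) auto
  then have "\<bar>cutoff' (x / Suc n) / Suc n\<bar> \<le> \<bar>cutoff' (x / Suc n)\<bar>"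
    by (simp add: abs_divide)
  then have bound: "\<bar>cutoff' (x / Suc n) / Suc n\<bar> * cmod u + \<bar>cutoff (x / Suc n)\<bar> * cmod v
      \<le> 4 * cmod u + 1 * cmod v"
    using abs_cutoff'_le_4 abs_cutoff_le_1
    by (intro add_mono mult_right_mono) (auto intro: order.trans)
  have "norm (complex_of_real (cutoff' (x / Suc n) / Suc n) * u + complex_of_real (cutoff (x / Suc n)) * v)
      \<le> \<bar>cutoff' (x / Suc n) / Suc n\<bar> * cmod u + \<bar>cutoff (x / Suc n)\<bar> * cmod v"
    by (rule order.trans[OF norm_triangle_ineq]) (simp only: norm_mult norm_of_real order.refl)
  with bound show ?thesis by simp
qed

lemma integral_cutoff_tendsto:
  fixes u v :: "real \<Rightarrow> complex"
  assumes [measurable]: "u \<in> borel_measurable lborel" "v \<in> borel_measurable lborel"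
    and "integrable lborel (\<lambda>x. cmod (u x))" "integrable lborel (\<lambda>x. cmod (v x))"
  shows "(\<lambda>n. LINT x|lborel. complex_of_real (cutoff' (x / Suc n) / Suc n) * u x
      + complex_of_real (cutoff (x / Suc n)) * v x) \<longlonglongrightarrow> (LINT x|lborel. v x)"
proof (rule integral_dominated_convergence[where w="\<lambda>x. 4 * cmod (u x) + cmod (v x)"])
  have [measurable]: "cutoff \<in> borel_measurable borel" "cutoff' \<in> borel_measurable borel"
    using continuous_on_cutoff' isCont_cutoff
    by (auto intro!: borel_measurable_continuous_onI continuous_at_imp_continuous_on)
  show "(\<lambda>x. complex_of_real (cutoff' (x / Suc n) / Suc n) * u x
      + complex_of_real (cutoff (x / Suc n)) * v x) \<in> borel_measurable lborel" for n
    by measurable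
  show "v \<in> borel_measurable lborel" by measurable
  show "integrable lborel (\<lambda>x. 4 * cmod (u x) + cmod (v x))"
    using assms by auto
  have "(\<lambda>n. complex_of_real (cutoff' (x / Suc n) / Suc n) * u x
      + complex_of_real (cutoff (x / Suc n)) * v x) \<longlonglongrightarrow> complex_of_real 0 * u x + complex_of_real 1 * v x"
    for x by (intro tendsto_intros cutoff_rescaled_tendsto cutoff'_rescaled_tendsto)
  then show "AE x in lborel. (\<lambda>n. complex_of_real (cutoff' (x / Suc n) / Suc n) * u x
      + complex_of_real (cutoff (x / Suc n)) * v x) \<longlonglongrightarrow> v x"
    by simp
  show "AE x in lborel. norm (complex_of_real (cutoff' (x / Suc n) / Suc n) * u x
      + complex_of_real (cutoff (x / Suc n)) * v x) \<le> 4 * cmod (u x) + cmod (v x)" for n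
    by (intro AE_I2 norm_cutoff_combination_le)
qed

lemma integrable_norm_mult_L2:
  assumes "L2 f" "L2 g"
  shows "integrable lborel (\<lambda>x. cmod (f x * g x))"
proof (rule Bochner_Integration.integrable_bound)
  show "integrable lborel (\<lambda>x. ((cmod (f x))\<^sup>2 + (cmod (g x))\<^sup>2) / 2)"
    using assms unfolding L2_def by auto
  have [measurable]: "f \<in> borel_measurable lborel" "g \<in> borel_measurable lborel"
    using assms unfolding L2_def by auto
  show "(\<lambda>x. cmod (f x * g x)) \<in> borel_measurable lborel"
    by measurable
  have "cmod (f x * g x) \<le> ((cmod (f x))\<^sup>2 + (cmod (g x))\<^sup>2) / 2" for x
    using sum_squares_bound[of "cmod (f x)" "cmod (g x)"] by (simp add: norm_mult)
  then show "AE x in lborel. norm (cmod (f x * g x)) \<le> norm (((cmod (f x))\<^sup>2 + (cmod (g x))\<^sup>2) / 2)"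
    by (auto intro!: AE_I2)
qed

text \<open>The weak derivative identity is applied to the test functions \<open>cutoff (x/N) \<psi>(x)\<^sup>*\<close>
  and \<open>N \<rightarrow> \<infinity>\<close> by dominated convergence.\<close>

lemma p_op_integration_by_parts:
  fixes \<psi> \<psi>' :: "real \<Rightarrow> complex"
  assumes p: "p_op f w"
    and \<psi>': "\<And>x. (\<psi> has_vector_derivative \<psi>' x) (at x)" and cont: "continuous_on UNIV \<psi>'"
    and L2: "L2 \<psi>" "L2 \<psi>'"
  shows "(LINT x|lborel. f x * cnj (\<psi>' x)) = - (LINT x|lborel. \<i> * w x * cnj (\<psi> x))"
proof -
  have L2_fw: "L2 f" "L2 w" and weak: "weak_deriv f (\<lambda>x. \<i> * w x)"
    using p by (auto simp: p_op_def)
  have L2_cnj: "L2 (\<lambda>x. cnj (\<psi> x))" "L2 (\<lambda>x. cnj (\<psi>' x))"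
    using L2 by (auto simp: L2_def)
  have cnj': "((\<lambda>x. cnj (\<psi> x)) has_vector_derivative cnj (\<psi>' x)) (at x)" for x
    by (rule has_vector_derivative_cnj[OF \<psi>'])
  have [measurable]: "f \<in> borel_measurable lborel" "w \<in> borel_measurable lborel"
    "\<psi> \<in> borel_measurable lborel" "\<psi>' \<in> borel_measurable lborel"
    using L2 L2_fw by (auto simp: L2_def)
  have weak_cutoff: "(LINT x|lborel. f x * (complex_of_real (cutoff' (x / Suc n) / Suc n) * cnj (\<psi> x)
      + complex_of_real (cutoff (x / Suc n)) * cnj (\<psi>' x)))
      = - (LINT x|lborel. \<i> * w x * (complex_of_real (cutoff (x / Suc n)) * cnj (\<psi> x)))" for n
    using weak test_fun_cutoff_mult[OF cnj' continuous_on_cnj[OF cont], of "Suc n"]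
    unfolding weak_deriv_def by simp
  have "(\<lambda>n. LINT x|lborel. complex_of_real (cutoff' (x / Suc n) / Suc n) * (f x * cnj (\<psi> x))
      + complex_of_real (cutoff (x / Suc n)) * (f x * cnj (\<psi>' x)))
      \<longlonglongrightarrow> (LINT x|lborel. f x * cnj (\<psi>' x))"
    using integrable_norm_mult_L2[OF L2_fw(1) L2_cnj(1)] integrable_norm_mult_L2[OF L2_fw(1) L2_cnj(2)]
    by (intro integral_cutoff_tendsto) measurable
  then have lim_f: "(\<lambda>n. LINT x|lborel. f x * (complex_of_real (cutoff' (x / Suc n) / Suc n) * cnj (\<psi> x)
      + complex_of_real (cutoff (x / Suc n)) * cnj (\<psi>' x))) \<longlonglongrightarrow> (LINT x|lborel. f x * cnj (\<psi>' x))"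
    by (simp add: algebra_simps)
  have "(\<lambda>n. LINT x|lborel. complex_of_real (cutoff' (x / Suc n) / Suc n) * 0
      + complex_of_real (cutoff (x / Suc n)) * (\<i> * w x * cnj (\<psi> x)))
      \<longlonglongrightarrow> (LINT x|lborel. \<i> * w x * cnj (\<psi> x))"
    using integrable_norm_mult_L2[OF L2_fw(2) L2_cnj(1)]
    by (intro integral_cutoff_tendsto) (auto simp: norm_mult)
  then have "(\<lambda>n. LINT x|lborel. f x * (complex_of_real (cutoff' (x / Suc n) / Suc n) * cnj (\<psi> x)
      + complex_of_real (cutoff (x / Suc n)) * cnj (\<psi>' x))) \<longlonglongrightarrow> - (LINT x|lborel. \<i> * w x * cnj (\<psi> x))"
    unfolding weak_cutoff by (intro tendsto_minus) (simp add: algebra_simps)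
  with lim_f show ?thesis
    by (rule LIMSEQ_unique)
qed

lemma L2inner_p_op_C1:
  fixes \<psi> \<psi>' :: "real \<Rightarrow> complex"
  assumes p: "p_op f w"
    and \<psi>': "\<And>x. (\<psi> has_vector_derivative \<psi>' x) (at x)" and cont: "continuous_on UNIV \<psi>'"
    and L2: "L2 \<psi>" "L2 \<psi>'"
  shows "L2inner w \<psi> = L2inner f (\<lambda>x. -\<i> * \<psi>' x)"
proof -
  have "L2inner f (\<lambda>x. -\<i> * \<psi>' x) = (LINT x|lborel. (-\<i>) * cnj (f x * cnj (\<psi>' x)))"
    unfolding L2inner_def by (simp add: algebra_simps)
  also have "\<dots> = (-\<i>) * cnj (LINT x|lborel. f x * cnj (\<psi>' x))"
    unfolding Bochner_Integration.integral_cnj[symmetric] by (rule integral_mult_right_zero)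
  also have "\<dots> = \<i> * cnj (LINT x|lborel. \<i> * w x * cnj (\<psi> x))"
    by (simp add: p_op_integration_by_parts[OF assms])
  also have "\<dots> = \<i> * (LINT x|lborel. cnj (\<i> * w x * cnj (\<psi> x)))"
    by (simp only: Bochner_Integration.integral_cnj)
  also have "\<dots> = \<i> * (LINT x|lborel. (-\<i>) * (cnj (w x) * \<psi> x))"
    by (simp add: mult.assoc)
  also have "\<dots> = L2inner w \<psi>"
    unfolding L2inner_def by (subst integral_mult_right_zero) simp
  finally show ?thesis ..
qed

lemma t_adj_gauss_sum:
  assumes fin: "finite I" and pos: "\<forall>i\<in>I. r i > 0" and odd: "\<forall>i\<in>I. odd_poly (P i)"
  shows "t_adj (gauss_sum I r P) (gauss_sum I r (\<lambda>i. p_qinv_poly (r i) (P i)))"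
  unfolding t_adj_def
proof (intro conjI L2_gauss_sum fin pos allI impI)
  fix f u assume "t_op f u"
  then obtain w where p: "p_op f w" and qinv: "qinv_op w u" unfolding t_op_def by blast
  define \<psi> where "\<psi> = gauss_sum I r (\<lambda>i. poly_shift 1 (P i))"
  define \<psi>' where "\<psi>' = gauss_sum I r (\<lambda>i. gauss_deriv (r i) (poly_shift 1 (P i)))"
  have "\<forall>i\<in>I. coeff (P i) 0 = 0" using odd by (auto simp: odd_poly_def)
  then have P: "gauss_sum I r P x = complex_of_real x * \<psi> x" for x
    unfolding \<psi>_def by (rule gauss_sum_eq_mult_poly_shift)
  have p_qinv: "gauss_sum I r (\<lambda>i. p_qinv_poly (r i) (P i)) x = -\<i> * \<psi>' x" for x
    unfolding \<psi>'_def p_qinv_poly_def by (simp add: gauss_sum_smult gauss_sum_minus)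
  have [measurable]: "u \<in> borel_measurable lborel" "w \<in> borel_measurable lborel"
    using p qinv by (auto simp: p_op_def qinv_op_def L2_def)
  have [measurable]: "\<psi> \<in> borel_measurable lborel" "gauss_sum I r P \<in> borel_measurable lborel"
    unfolding \<psi>_def by (rule borel_measurable_gauss_sum)+
  have uw: "AE x in lborel. u x = w x / complex_of_real x"
    using qinv by (simp add: qinv_op_def)
  have "AE x in lborel. cnj (u x) * gauss_sum I r P x = cnj (w x) * \<psi> x"
    using uw AE_lborel_singleton[of 0] by eventually_elim (simp add: P)
  then have "L2inner u (gauss_sum I r P) = L2inner w \<psi>"
    unfolding L2inner_def by (intro integral_cong_AE) measurable
  also have "\<dots> = L2inner f (\<lambda>x. -\<i> * \<psi>' x)"
    unfolding \<psi>_def \<psi>'_def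
    by (rule L2inner_p_op_C1[OF p gauss_sum_has_vector_derivative continuous_on_gauss_sum
        L2_gauss_sum[OF fin pos] L2_gauss_sum[OF fin pos]])
  also have "\<dots> = L2inner f (gauss_sum I r (\<lambda>i. p_qinv_poly (r i) (P i)))"
    unfolding L2inner_def by (simp add: p_qinv)
  finally show "L2inner u (gauss_sum I r P) = L2inner f (gauss_sum I r (\<lambda>i. p_qinv_poly (r i) (P i)))" .
qed

section \<open>The commutator identity on polynomial factors\<close>

lemma coeff_osc_poly:
  "coeff (osc_poly e a Q) k = (1/2) * (- complex_of_real e * coeff (gauss_deriv a (gauss_deriv a Q)) k
     + (case k of 0 \<Rightarrow> 0 | Suc 0 \<Rightarrow> 0 | Suc (Suc j) \<Rightarrow> coeff Q j))"
  by (simp add: osc_poly_def coeff_pCons split: nat.split)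

lemma osc_poly_add: "osc_poly e a (X + Y) = osc_poly e a X + osc_poly e a Y"
  by (rule poly_eqI) (simp add: coeff_osc_poly coeff_gauss_deriv algebra_simps split: nat.split)

lemma osc_poly_smult: "osc_poly e a (smult c X) = smult c (osc_poly e a X)"
  by (rule poly_eqI) (simp add: coeff_osc_poly coeff_gauss_deriv algebra_simps split: nat.split)

lemma qinv_p_poly_add: "qinv_p_poly a (X + Y) = qinv_p_poly a X + qinv_p_poly a Y"
  by (rule poly_eqI) (simp add: coeff_qinv_p_poly algebra_simps)

lemma qinv_p_poly_smult: "qinv_p_poly a (smult c X) = smult c (qinv_p_poly a X)"
  by (rule poly_eqI) (simp add: coeff_qinv_p_poly algebra_simps)

lemma p_qinv_poly_add: "p_qinv_poly a (X + Y) = p_qinv_poly a X + p_qinv_poly a Y"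
  by (rule poly_eqI)
    (simp add: p_qinv_poly_def coeff_gauss_deriv coeff_poly_shift algebra_simps split: nat.split)

lemma p_qinv_poly_smult: "p_qinv_poly a (smult c X) = smult c (p_qinv_poly a X)"
  by (rule poly_eqI)
    (simp add: p_qinv_poly_def coeff_gauss_deriv coeff_poly_shift algebra_simps split: nat.split)

lemma even_poly_osc_poly: "even_poly Q \<Longrightarrow> even_poly (osc_poly e a Q)"
  unfolding even_poly_def
proof (intro allI impI)
  fix k :: nat assume even: "\<forall>k. odd k \<longrightarrow> coeff Q k = 0" and "odd k"
  then obtain j where j: "k = Suc (2 * j)" by (metis oddE Suc_eq_plus1)
  show "coeff (osc_poly e a Q) k = 0"
  proof (cases j)
    case 0 then show ?thesis using even j by (simp add: coeff_osc_poly coeff_gauss_deriv)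
  next
    case (Suc i)
    have "odd (Suc (2*i))" "odd (Suc (Suc (Suc (2*i))))" "odd (Suc (Suc (Suc (Suc (Suc (2*i))))))"
      by auto
    then show ?thesis using even j Suc by (simp add: coeff_osc_poly coeff_gauss_deriv)
  qed
qed

lemma odd_poly_osc_poly: "odd_poly Q \<Longrightarrow> odd_poly (osc_poly e a Q)"
  unfolding odd_poly_def
proof (intro allI impI)
  fix k :: nat assume odd: "\<forall>k. even k \<longrightarrow> coeff Q k = 0" and "even k"
  then obtain j where j: "k = 2 * j" by (metis evenE)
  show "coeff (osc_poly e a Q) k = 0"
  proof (cases j)
    case 0 then show ?thesis using odd j by (simp add: coeff_osc_poly coeff_gauss_deriv)
  next
    case (Suc i)
    have "even (2*i)" "even (Suc (Suc (2*i)))" "even (Suc (Suc (Suc (Suc (2*i)))))" by auto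
    then show ?thesis using odd j Suc by (simp add: coeff_osc_poly coeff_gauss_deriv)
  qed
qed

lemma osc_poly_qinv_p_poly_commutator:
  assumes "even_poly Q"
  shows "osc_poly e a (qinv_p_poly a Q) - qinv_p_poly a (osc_poly e a Q)
    = smult \<i> (Q + smult (complex_of_real e) (qinv_p_poly a (qinv_p_poly a Q)))"
proof (rule poly_eqI)
  fix k
  have odd_coeffs: "coeff Q 1 = 0" "coeff Q 3 = 0" "coeff Q 5 = 0"
    using assms by (auto simp: even_poly_def)
  show "coeff (osc_poly e a (qinv_p_poly a Q) - qinv_p_poly a (osc_poly e a Q)) k
      = coeff (smult \<i> (Q + smult (complex_of_real e) (qinv_p_poly a (qinv_p_poly a Q)))) k"
    using odd_coeffs
    by (induction k rule: nat_induct2)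
      (simp_all add: coeff_osc_poly qinv_p_poly_def coeff_gauss_deriv coeff_poly_shift
        numeral_eq_Suc add_2_eq_Suc' field_simps)
qed

lemma osc_poly_p_qinv_poly_commutator:
  assumes "odd_poly Q"
  shows "osc_poly e a (p_qinv_poly a Q) - p_qinv_poly a (osc_poly e a Q)
    = smult \<i> (Q + smult (complex_of_real e) (p_qinv_poly a (p_qinv_poly a Q)))"
proof (rule poly_eqI)
  fix k
  have even_coeffs: "coeff Q 0 = 0" "coeff Q 2 = 0" "coeff Q 4 = 0" "coeff Q 6 = 0"
    using assms by (auto simp: odd_poly_def)
  then have shift: "(case j of 0 \<Rightarrow> 0 | Suc x \<Rightarrow> coeff (poly_shift (Suc 0) Q) x) = coeff Q j" for j
    by (cases j) (simp_all add: coeff_poly_shift)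
  show "coeff (osc_poly e a (p_qinv_poly a Q) - p_qinv_poly a (osc_poly e a Q)) k
      = coeff (smult \<i> (Q + smult (complex_of_real e) (p_qinv_poly a (p_qinv_poly a Q)))) k"
    using even_coeffs
    by (induction k rule: nat_induct2)
      (simp_all add: coeff_osc_poly p_qinv_poly_def coeff_gauss_deriv coeff_poly_shift shift
        numeral_eq_Suc add_2_eq_Suc' field_simps)
qed

lemma gauss_deriv_coeff_tendsto:
  assumes "\<And>k. (\<lambda>N. coeff (Z N) k) \<longlonglongrightarrow> coeff Z0 k"
  shows "(\<lambda>N. coeff (gauss_deriv a (Z N)) k) \<longlonglongrightarrow> coeff (gauss_deriv a Z0) k"
  unfolding coeff_gauss_deriv by (cases k) (simp_all add: assms tendsto_intros)

lemma osc_poly_coeff_tendsto: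
  assumes "\<And>k. (\<lambda>N. coeff (Z N) k) \<longlonglongrightarrow> coeff Z0 k"
  shows "(\<lambda>N. coeff (osc_poly e a (Z N)) k) \<longlonglongrightarrow> coeff (osc_poly e a Z0) k"
proof -
  have "(\<lambda>N. coeff (gauss_deriv a (gauss_deriv a (Z N))) k) \<longlonglongrightarrow> coeff (gauss_deriv a (gauss_deriv a Z0)) k"
    for k by (intro gauss_deriv_coeff_tendsto assms)
  then show ?thesis
    unfolding coeff_osc_poly by (auto intro!: tendsto_intros assms split: nat.split)
qed

section \<open>The arctan series of a degree-lowering operator\<close>

definition weighted_coeff_norm :: "real \<Rightarrow> nat \<Rightarrow> complex poly \<Rightarrow> real" where
  "weighted_coeff_norm R d Y = (\<Sum>k\<le>d. cmod (coeff Y k) * R^k)"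

lemma weighted_coeff_norm_nonneg: "R \<ge> 0 \<Longrightarrow> weighted_coeff_norm R d Y \<ge> 0"
  unfolding weighted_coeff_norm_def by (intro sum_nonneg) simp

lemma norm_coeff_le_weighted_coeff_norm:
  assumes "k \<le> d" "R \<ge> 1"
  shows "cmod (coeff Y k) \<le> weighted_coeff_norm R d Y"
proof -
  have "cmod (coeff Y k) \<le> cmod (coeff Y k) * R^k"
    using assms(2) by (simp add: mult_le_cancel_left1 one_le_power)
  also have "\<dots> \<le> weighted_coeff_norm R d Y"
    unfolding weighted_coeff_norm_def by (rule member_le_sum) (use assms in auto)
  finally show ?thesis .
qed

lemma sum_atMost_shift_2_le:
  fixes g :: "nat \<Rightarrow> real"
  assumes "\<And>j. 0 \<le> g j" "\<And>j. j > d \<Longrightarrow> g j = 0"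
  shows "(\<Sum>k\<le>d. g (k+2)) \<le> (\<Sum>k\<le>d. g k)"
proof -
  have "(\<Sum>k\<le>d. g (k+2)) = (\<Sum>j\<in>(\<lambda>k. k+2) ` {..d}. g j)"
    by (subst sum.reindex) (auto simp: inj_on_def)
  also have "\<dots> \<le> (\<Sum>j\<le>d+2. g j)"
    by (rule sum_mono2) (auto simp: assms(1))
  also have "\<dots> = (\<Sum>j\<le>d. g j)"
    by (rule sum.mono_neutral_right) (auto simp: assms(2))
  finally show ?thesis .
qed

text \<open>\<open>T\<close> and \<open>H\<close> model the actions of \<open>t\<close> (or \<open>t\<^sup>*\<close>) and \<open>h\<^sub>\<epsilon>\<close> on the polynomial factor of
  a single Gaussian term, with \<open>s = \<surd>\<epsilon>\<close>.\<close>

locale arctan_commutator =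
  fixes T :: "complex poly \<Rightarrow> complex poly" and C :: "complex poly \<Rightarrow> bool"
    and H :: "complex poly \<Rightarrow> complex poly"
    and lam :: complex and mu :: "nat \<Rightarrow> complex" and s :: real
  assumes T_add: "T (X + Y) = T X + T Y"
    and T_smult: "T (smult c X) = smult c (T X)"
    and H_add: "H (X + Y) = H X + H Y"
    and H_smult: "H (smult c X) = smult c (H X)"
    and C_T: "C X \<Longrightarrow> C (T X)"
    and C_H: "C X \<Longrightarrow> C (H X)"
    and coeff_T: "C X \<Longrightarrow> coeff (T X) k = lam * coeff X k + mu k * coeff X (k+2)"
    and norm_mu_le: "cmod (mu k) \<le> real k + 2"
    and s_pos: "s > 0"
    and s_lam_less_1: "s * cmod lam < 1"
    and commutator: "C X \<Longrightarrow> H (T X) - T (H X) = smult \<i> (X + smult (complex_of_real (s\<^sup>2)) (T (T X)))"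
    and H_coeff_tendsto: "(\<And>k. (\<lambda>N. coeff (Z N) k) \<longlonglongrightarrow> coeff Z0 k) \<Longrightarrow>
      (\<lambda>N. coeff (H (Z N)) k) \<longlonglongrightarrow> coeff (H Z0) k"
begin

lemma C_funpow_T: "C X \<Longrightarrow> C ((T^^m) X)"
  by (induction m) (auto intro: C_T)

lemma degree_T_le:
  assumes "C X" "degree X \<le> d"
  shows "degree (T X) \<le> d"
proof (rule degree_le, intro allI impI)
  fix k assume "d < k"
  then have "coeff X k = 0" "coeff X (k+2) = 0" using assms(2) by (auto intro!: coeff_eq_0)
  then show "coeff (T X) k = 0" by (simp add: coeff_T[OF assms(1)])
qed

lemma degree_funpow_T_le: "C X \<Longrightarrow> degree ((T^^m) X) \<le> degree X"
  by (induction m) (auto intro: order.trans[OF degree_T_le] C_funpow_T)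

lemma coeff_funpow_T_eq_0: "C X \<Longrightarrow> degree X < k \<Longrightarrow> coeff ((T^^m) X) k = 0"
  using degree_funpow_T_le[of X m] by (intro coeff_eq_0) simp

lemma weighted_coeff_norm_T_le:
  assumes CY: "C Y" and deg: "degree Y \<le> d" and R: "R \<ge> 1"
  shows "weighted_coeff_norm R d (T Y) \<le> (cmod lam + (real d + 2) / R\<^sup>2) * weighted_coeff_norm R d Y"
proof -
  have R_pos: "R > 0" using R by simp
  have "weighted_coeff_norm R d (T Y) \<le> (\<Sum>k\<le>d. cmod lam * (cmod (coeff Y k) * R^k)
      + (real d + 2) / R\<^sup>2 * (cmod (coeff Y (k+2)) * R^(k+2)))"
    unfolding weighted_coeff_norm_def
  proof (rule sum_mono)
    fix k assume k: "k \<in> {..d}"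
    have "cmod (coeff (T Y) k) \<le> cmod lam * cmod (coeff Y k) + cmod (mu k) * cmod (coeff Y (k+2))"
      unfolding coeff_T[OF CY] by (rule order.trans[OF norm_triangle_ineq]) (simp add: norm_mult)
    also have "\<dots> \<le> cmod lam * cmod (coeff Y k) + (real d + 2) * cmod (coeff Y (k+2))"
      using norm_mu_le[of k] k by (intro add_left_mono mult_right_mono) auto
    finally have "cmod (coeff (T Y) k) * R^k
        \<le> (cmod lam * cmod (coeff Y k) + (real d + 2) * cmod (coeff Y (k+2))) * R^k"
      by (rule mult_right_mono) (use R_pos in simp)
    moreover have "(real d + 2) * cmod (coeff Y (k+2)) * R^k
        = (real d + 2) / R\<^sup>2 * (cmod (coeff Y (k+2)) * R^(k+2))"
      using R_pos by (simp add: power_add field_simps power2_eq_square)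
    moreover have "(cmod lam * cmod (coeff Y k) + (real d + 2) * cmod (coeff Y (k+2))) * R^k
        = cmod lam * (cmod (coeff Y k) * R^k) + (real d + 2) * cmod (coeff Y (k+2)) * R^k"
      by (simp add: algebra_simps)
    ultimately show "cmod (coeff (T Y) k) * R^k \<le> cmod lam * (cmod (coeff Y k) * R^k)
        + (real d + 2) / R\<^sup>2 * (cmod (coeff Y (k+2)) * R^(k+2))"
      by linarith
  qed
  also have "\<dots> = cmod lam * weighted_coeff_norm R d Y
      + (real d + 2) / R\<^sup>2 * (\<Sum>k\<le>d. cmod (coeff Y (k+2)) * R^(k+2))"
    by (simp add: weighted_coeff_norm_def sum.distrib sum_distrib_left)
  also have "(\<Sum>k\<le>d. cmod (coeff Y (k+2)) * R^(k+2)) \<le> weighted_coeff_norm R d Y"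
    unfolding weighted_coeff_norm_def
    by (rule sum_atMost_shift_2_le[where g="\<lambda>j. cmod (coeff Y j) * R^j"])
      (use R_pos deg in \<open>auto simp: coeff_eq_0\<close>)
  then have "(real d + 2) / R\<^sup>2 * (\<Sum>k\<le>d. cmod (coeff Y (k+2)) * R^(k+2))
      \<le> (real d + 2) / R\<^sup>2 * weighted_coeff_norm R d Y"
    by (rule mult_left_mono) (use R_pos in simp)
  finally show ?thesis by (simp add: algebra_simps)
qed

text \<open>For large \<open>R\<close> the degree-lowering part of \<open>T\<close> is small in the norm
  \<open>\<Sum>\<^sub>k |c\<^sub>k| R\<^sup>k\<close>, so \<open>s T\<close> is a contraction there.\<close>

lemma weighted_coeff_norm_contraction:
  obtains R \<rho> where "R \<ge> 1" "0 \<le> \<rho>" "\<rho> < 1"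
    "\<And>Y. C Y \<Longrightarrow> degree Y \<le> d \<Longrightarrow> s * weighted_coeff_norm R d (T Y) \<le> \<rho> * weighted_coeff_norm R d Y"
proof -
  define \<delta> where "\<delta> = (1 - s * cmod lam) / 2"
  have \<delta>: "\<delta> > 0" using s_lam_less_1 by (simp add: \<delta>_def)
  define R where "R = 1 + s * (real d + 2) / \<delta>"
  have R: "R \<ge> 1" using s_pos \<delta> by (simp add: R_def)
  have "s * (real d + 2) / \<delta> \<le> R" by (simp add: R_def)
  also have "R \<le> R\<^sup>2" using R by (simp add: power2_eq_square)
  finally have "s * (real d + 2) \<le> \<delta> * R\<^sup>2" using \<delta> by (simp add: divide_le_eq mult.commute)
  then have small: "s * ((real d + 2) / R\<^sup>2) \<le> \<delta>" using R by (simp add: field_simps)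
  show ?thesis
  proof (rule that[OF R])
    show "0 \<le> s * cmod lam + \<delta>" "s * cmod lam + \<delta> < 1"
      using \<delta> s_pos s_lam_less_1 by (simp_all add: \<delta>_def field_simps)
    fix Y assume Y: "C Y" "degree Y \<le> d"
    have "s * weighted_coeff_norm R d (T Y) \<le> s * ((cmod lam + (real d + 2) / R\<^sup>2) * weighted_coeff_norm R d Y)"
      by (rule mult_left_mono[OF weighted_coeff_norm_T_le[OF Y R]]) (use s_pos in simp)
    also have "\<dots> = (s * cmod lam + s * ((real d + 2) / R\<^sup>2)) * weighted_coeff_norm R d Y"
      by (simp add: algebra_simps)
    also have "\<dots> \<le> (s * cmod lam + \<delta>) * weighted_coeff_norm R d Y"
      using small weighted_coeff_norm_nonneg[of R] R by (intro mult_right_mono) auto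
    finally show "s * weighted_coeff_norm R d (T Y) \<le> (s * cmod lam + \<delta>) * weighted_coeff_norm R d Y" .
  qed
qed

lemma funpow_T_coeff_decay:
  assumes CX: "C X"
  obtains B \<rho> where "0 \<le> B" "0 \<le> \<rho>" "\<rho> < 1" "\<And>m k. s^m * cmod (coeff ((T^^m) X) k) \<le> B * \<rho>^m"
proof -
  obtain R \<rho> where R: "R \<ge> 1" and \<rho>: "0 \<le> \<rho>" "\<rho> < 1" and contr:
    "\<And>Y. C Y \<Longrightarrow> degree Y \<le> degree X \<Longrightarrow>
      s * weighted_coeff_norm R (degree X) (T Y) \<le> \<rho> * weighted_coeff_norm R (degree X) Y"
    using weighted_coeff_norm_contraction by blast
  let ?W = "weighted_coeff_norm R (degree X)"
  have pow: "s^m * ?W ((T^^m) X) \<le> \<rho>^m * ?W X" for m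
  proof (induction m)
    case (Suc m)
    have "s^(Suc m) * ?W ((T^^Suc m) X) = s^m * (s * ?W (T ((T^^m) X)))" by simp
    also have "\<dots> \<le> s^m * (\<rho> * ?W ((T^^m) X))"
      using C_funpow_T[OF CX] degree_funpow_T_le[OF CX] s_pos by (intro mult_left_mono contr) auto
    also have "\<dots> = \<rho> * (s^m * ?W ((T^^m) X))" by (simp add: algebra_simps)
    also have "\<dots> \<le> \<rho> * (\<rho>^m * ?W X)" by (rule mult_left_mono[OF Suc.IH \<rho>(1)])
    finally show ?case by simp
  qed simp
  show ?thesis
  proof (rule that[of "?W X" \<rho>])
    show "0 \<le> ?W X" using R by (simp add: weighted_coeff_norm_nonneg)
    show "0 \<le> \<rho>" "\<rho> < 1" by (rule \<rho>)+
    fix m k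
    show "s^m * cmod (coeff ((T^^m) X) k) \<le> ?W X * \<rho>^m"
    proof (cases "k \<le> degree X")
      case True
      have "s^m * cmod (coeff ((T^^m) X) k) \<le> s^m * ?W ((T^^m) X)"
        by (rule mult_left_mono[OF norm_coeff_le_weighted_coeff_norm[OF True R]]) (use s_pos in simp)
      also have "\<dots> \<le> \<rho>^m * ?W X" by (rule pow)
      finally show ?thesis by (simp add: mult.commute)
    next
      case False
      then show ?thesis
        using coeff_funpow_T_eq_0[OF CX] R \<rho> by (simp add: weighted_coeff_norm_nonneg)
    qed
  qed
qed

definition arctan_coeff :: "nat \<Rightarrow> complex" where
  "arctan_coeff n = complex_of_real ((-1)^n / real (2*n+1) * s^(2*n+1))"

definition arctan_partial :: "nat \<Rightarrow> complex poly \<Rightarrow> complex poly" where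
  "arctan_partial N X = (\<Sum>n\<le>N. smult (arctan_coeff n) ((T^^(2*n+1)) X))"

definition arctan_series :: "complex poly \<Rightarrow> complex poly" where
  "arctan_series X = (\<Sum>k\<le>degree X. monom (\<Sum>n. arctan_coeff n * coeff ((T^^(2*n+1)) X) k) k)"

lemma coeff_arctan_partial:
  "coeff (arctan_partial N X) k = (\<Sum>n\<le>N. arctan_coeff n * coeff ((T^^(2*n+1)) X) k)"
  by (simp add: arctan_partial_def coeff_sum)

lemma coeff_arctan_series:
  "coeff (arctan_series X) k =
    (if k \<le> degree X then (\<Sum>n. arctan_coeff n * coeff ((T^^(2*n+1)) X) k) else 0)"
  by (simp add: arctan_series_def coeff_sum coeff_monom)

lemma degree_arctan_series_le: "degree (arctan_series X) \<le> degree X"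
  by (rule degree_le) (simp add: coeff_arctan_series)

lemma degree_arctan_partial_le: "C X \<Longrightarrow> degree (arctan_partial N X) \<le> degree X"
  by (rule degree_le) (simp add: coeff_arctan_partial coeff_funpow_T_eq_0 del: funpow.simps)

lemma norm_arctan_coeff_le: "cmod (arctan_coeff n) \<le> s^(2*n+1)"
proof -
  have "cmod (arctan_coeff n) = \<bar>(-1)^n / real (2*n+1) * s^(2*n+1)\<bar>"
    by (simp only: arctan_coeff_def norm_of_real)
  also have "\<dots> = s^(2*n+1) / real (2*n+1)"
    using s_pos by (simp add: abs_mult power_abs)
  also have "\<dots> \<le> s^(2*n+1) / 1" by (rule divide_left_mono) (use s_pos in auto)
  finally show ?thesis by simp
qed

lemma arctan_partial_coeff_tendsto:
  assumes CX: "C X"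
  shows "(\<lambda>N. coeff (arctan_partial N X) k) \<longlonglongrightarrow> coeff (arctan_series X) k"
proof (cases "k \<le> degree X")
  case True
  obtain B \<rho> where B: "0 \<le> B" "0 \<le> \<rho>" "\<rho> < 1"
    and decay: "\<And>m k. s^m * cmod (coeff ((T^^m) X) k) \<le> B * \<rho>^m"
    using funpow_T_coeff_decay[OF CX] by blast
  have bound: "norm (arctan_coeff n * coeff ((T^^(2*n+1)) X) k) \<le> B * \<rho>^n" for n
  proof -
    have "norm (arctan_coeff n * coeff ((T^^(2*n+1)) X) k)
        \<le> s^(2*n+1) * cmod (coeff ((T^^(2*n+1)) X) k)"
      unfolding norm_mult by (rule mult_right_mono[OF norm_arctan_coeff_le]) simp
    also have "\<dots> \<le> B * \<rho>^(2*n+1)" by (rule decay)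
    also have "\<dots> \<le> B * \<rho>^n"
      by (rule mult_left_mono[OF power_decreasing]) (use B in auto)
    finally show ?thesis .
  qed
  have "summable (\<lambda>n. arctan_coeff n * coeff ((T^^(2*n+1)) X) k)"
  proof (rule summable_comparison_test[where g="\<lambda>n. B * \<rho>^n"])
    show "\<exists>N. \<forall>n\<ge>N. norm (arctan_coeff n * coeff ((T^^(2*n+1)) X) k) \<le> B * \<rho>^n"
      using bound by blast
    show "summable (\<lambda>n. B * \<rho>^n)"
      using B by (intro summable_mult summable_geometric) simp
  qed
  from summable_LIMSEQ'[OF this] show ?thesis
    unfolding coeff_arctan_partial coeff_arctan_series using True by simp
next
  case False
  then show ?thesis
    by (simp add: coeff_arctan_partial coeff_arctan_series coeff_funpow_T_eq_0[OF CX] del: funpow.simps)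
qed

lemma arctan_remainder_tendsto_0:
  assumes CX: "C X"
  shows "(\<lambda>N. complex_of_real (s^(2*N+2)) * coeff ((T^^(2*N+2)) X) k) \<longlonglongrightarrow> 0"
proof -
  obtain B \<rho> where B: "0 \<le> B" "0 \<le> \<rho>" "\<rho> < 1"
    and decay: "\<And>m k. s^m * cmod (coeff ((T^^m) X) k) \<le> B * \<rho>^m"
    using funpow_T_coeff_decay[OF CX] by blast
  show ?thesis
  proof (rule Lim_null_comparison)
    have "norm (complex_of_real (s^(2*N+2)) * coeff ((T^^(2*N+2)) X) k) \<le> B * \<rho>^N" for N
    proof -
      have "norm (complex_of_real (s^(2*N+2)) * coeff ((T^^(2*N+2)) X) k)
          = s^(2*N+2) * cmod (coeff ((T^^(2*N+2)) X) k)"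
        using s_pos by (simp only: norm_mult norm_of_real abs_of_nonneg zero_le_power less_imp_le)
      also have "\<dots> \<le> B * \<rho>^(2*N+2)" by (rule decay)
      also have "\<dots> \<le> B * \<rho>^N" by (rule mult_left_mono[OF power_decreasing]) (use B in auto)
      finally show ?thesis .
    qed
    then show "\<forall>\<^sub>F N in sequentially.
        norm (complex_of_real (s^(2*N+2)) * coeff ((T^^(2*N+2)) X) k) \<le> B * \<rho>^N"
      by simp
    show "(\<lambda>N. B * \<rho>^N) \<longlonglongrightarrow> 0"
      using tendsto_mult_right_zero[OF LIMSEQ_power_zero[of \<rho>]] B by simp
  qed
qed

lemma commutator_funpow_T:
  assumes CX: "C X"
  shows "H ((T^^Suc m) X) - (T^^Suc m) (H X)
    = smult (\<i> * of_nat (Suc m)) ((T^^m) X + smult (complex_of_real (s\<^sup>2)) ((T^^Suc (Suc m)) X))"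
proof (induction m)
  case 0 show ?case using commutator[OF CX] by simp
next
  case (Suc m)
  define Y where "Y = (T^^Suc m) X"
  have CY: "C Y" unfolding Y_def by (rule C_funpow_T[OF CX])
  define Z where "Z = smult (\<i> * of_nat (Suc m)) ((T^^m) X + smult (complex_of_real (s\<^sup>2)) ((T^^Suc (Suc m)) X))"
  have IH: "H Y = (T^^Suc m) (H X) + Z"
    using Suc.IH unfolding Y_def Z_def by (simp add: algebra_simps)
  have comm: "H (T Y) = T (H Y) + smult \<i> (Y + smult (complex_of_real (s\<^sup>2)) (T (T Y)))"
    using commutator[OF CY] by (simp add: algebra_simps)
  have TZ: "T Z = smult (\<i> * of_nat (Suc m)) (Y + smult (complex_of_real (s\<^sup>2)) (T (T Y)))"
    unfolding Z_def Y_def by (simp add: T_add T_smult)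
  have "H ((T^^Suc (Suc m)) X) - (T^^Suc (Suc m)) (H X) = H (T Y) - T ((T^^Suc m) (H X))"
    by (simp add: Y_def)
  also have "\<dots> = T Z + smult \<i> (Y + smult (complex_of_real (s\<^sup>2)) (T (T Y)))"
    by (simp add: comm IH T_add)
  also have "\<dots> = smult (\<i> * of_nat (Suc (Suc m))) (Y + smult (complex_of_real (s\<^sup>2)) (T (T Y)))"
    unfolding TZ by (simp add: smult_add_left[symmetric] algebra_simps)
  finally show ?case by (simp add: Y_def)
qed

lemma arctan_coeff_Suc_mult:
  "arctan_coeff (Suc N) * (\<i> * of_nat (2*N+3))
    = - (\<i> * (complex_of_real s * (-1)^N * complex_of_real (s^(2*N+2))))"
proof -
  have real: "(-1)^(Suc N) / real (2*Suc N+1) * s^(2*Suc N+1) * real (2*N+3)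
      = - (s * (-1)^N * s^(2*N+2))"
  proof -
    have "real (2*Suc N+1) \<noteq> 0" "2*Suc N+1 = Suc (2*N+2)" by simp_all
    then show ?thesis by (simp add: field_simps)
  qed
  have "arctan_coeff (Suc N) * of_nat (2*N+3)
      = complex_of_real ((-1)^(Suc N) / real (2*Suc N+1) * s^(2*Suc N+1) * real (2*N+3))"
    unfolding arctan_coeff_def by simp
  also have "\<dots> = - (complex_of_real s * (-1)^N * complex_of_real (s^(2*N+2)))"
    unfolding real by simp
  finally show ?thesis by (simp only: mult.left_commute[of "arctan_coeff (Suc N)"]) simp
qed

lemma arctan_partial_Suc:
  "arctan_partial (Suc N) X = arctan_partial N X + smult (arctan_coeff (Suc N)) ((T^^(2*Suc N+1)) X)"
  unfolding arctan_partial_def by (simp only: sum.atMost_Suc)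

lemma commutator_arctan_partial:
  assumes CX: "C X"
  shows "H (arctan_partial N X) - arctan_partial N (H X) = smult (\<i> * complex_of_real s)
    (X + smult (complex_of_real ((-1)^N * s^(2*N+2))) ((T^^(2*N+2)) X))"
proof (induction N)
  case 0
  have "H (arctan_partial 0 X) - arctan_partial 0 (H X) = smult (arctan_coeff 0) (H (T X) - T (H X))"
    by (simp add: arctan_partial_def H_smult smult_diff_right)
  then show ?case
    using commutator[OF CX] by (simp add: arctan_coeff_def smult_add_right power2_eq_square algebra_simps)
next
  case (Suc N)
  define U where "U = (T^^(2*N+2)) X"
  define V where "V = (T^^(2*Suc N+2)) X"
  have e: "2*Suc N+1 = Suc (2*N+2)" "Suc (Suc (2*N+2)) = 2*Suc N+2" by simp_all
  have comm: "H ((T^^(2*Suc N+1)) X) - (T^^(2*Suc N+1)) (H X)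
      = smult (\<i> * of_nat (2*N+3)) (U + smult (complex_of_real (s\<^sup>2)) V)"
    using commutator_funpow_T[OF CX, of "2*N+2"] unfolding e U_def V_def by (simp add: algebra_simps)
  have "H (arctan_partial (Suc N) X) - arctan_partial (Suc N) (H X)
      = (H (arctan_partial N X) - arctan_partial N (H X))
      + smult (arctan_coeff (Suc N)) (H ((T^^(2*Suc N+1)) X) - (T^^(2*Suc N+1)) (H X))"
    unfolding arctan_partial_Suc H_add H_smult by (simp add: smult_diff_right)
  also have "\<dots> = smult (\<i> * complex_of_real s) (X + smult (complex_of_real ((-1)^N * s^(2*N+2))) U)
      + smult (- (\<i> * (complex_of_real s * (-1)^N * complex_of_real (s^(2*N+2)))))
          (U + smult (complex_of_real (s\<^sup>2)) V)"
    unfolding Suc.IH comm smult_smult arctan_coeff_Suc_mult U_def ..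
  also have "\<dots> = smult (\<i> * complex_of_real s) (X + smult (complex_of_real ((-1)^(Suc N) * s^(2*Suc N+2))) V)"
  proof -
    have pow: "s^(2*Suc N+2) = s^(2*N+2) * s\<^sup>2"
      by (simp add: power_add[symmetric])
    show ?thesis unfolding pow by (intro poly_eqI) (simp add: algebra_simps)
  qed
  finally show ?case unfolding V_def .
qed

lemma commutator_arctan_series:
  assumes CX: "C X"
  shows "H (arctan_series X) - arctan_series (H X) = smult (\<i> * complex_of_real s) X"
proof (rule poly_eqI)
  fix k
  have H_lim: "(\<lambda>N. coeff (H (arctan_partial N X)) k) \<longlonglongrightarrow> coeff (H (arctan_series X)) k"
    by (rule H_coeff_tendsto) (rule arctan_partial_coeff_tendsto[OF CX])
  have lim: "(\<lambda>N. coeff (arctan_partial N (H X)) k) \<longlonglongrightarrow> coeff (arctan_series (H X)) k"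
    by (rule arctan_partial_coeff_tendsto[OF C_H[OF CX]])
  have lim_series: "(\<lambda>N. coeff (H (arctan_partial N X) - arctan_partial N (H X)) k)
      \<longlonglongrightarrow> coeff (H (arctan_series X)) k - coeff (arctan_series (H X)) k"
    using tendsto_diff[OF H_lim lim] by simp
  define t where "t N = complex_of_real (s^(2*N+2)) * coeff ((T^^(2*N+2)) X) k" for N
  have partial: "coeff (H (arctan_partial N X) - arctan_partial N (H X)) k
      = \<i> * complex_of_real s * coeff X k + \<i> * complex_of_real s * ((-1)^N * t N)" for N
    unfolding commutator_arctan_partial[OF CX] t_def by (simp add: algebra_simps)
  have t: "t \<longlonglongrightarrow> 0" unfolding t_def by (rule arctan_remainder_tendsto_0[OF CX])
  have "(\<lambda>N. (-1)^N * t N) \<longlonglongrightarrow> 0"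
    by (rule tendsto_norm_zero_cancel) (use tendsto_norm_zero[OF t] in \<open>simp add: norm_mult norm_power\<close>)
  then have "(\<lambda>N. coeff (H (arctan_partial N X) - arctan_partial N (H X)) k)
      \<longlonglongrightarrow> \<i> * complex_of_real s * coeff X k + \<i> * complex_of_real s * 0"
    unfolding partial by (intro tendsto_intros)
  from LIMSEQ_unique[OF lim_series this]
  show "coeff (H (arctan_series X) - arctan_series (H X)) k = coeff (smult (\<i> * complex_of_real s) X) k"
    by simp
qed

end

section \<open>The commutator on Gaussian sums\<close>

lemma arctan_commutator_qinv_p_poly:
  assumes "a > 0" "e > 0" "2 * a * sqrt e < 1"
  shows "arctan_commutator (qinv_p_poly a) even_poly (osc_poly e a)
    (\<i> * complex_of_real (2*a)) (\<lambda>k. - \<i> * of_nat (k+2)) (sqrt e)"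
proof
  fix X Y c k Z Z0
  show "qinv_p_poly a (X + Y) = qinv_p_poly a X + qinv_p_poly a Y" by (rule qinv_p_poly_add)
  show "qinv_p_poly a (smult c X) = smult c (qinv_p_poly a X)" by (rule qinv_p_poly_smult)
  show "osc_poly e a (X + Y) = osc_poly e a X + osc_poly e a Y" by (rule osc_poly_add)
  show "osc_poly e a (smult c X) = smult c (osc_poly e a X)" by (rule osc_poly_smult)
  show "even_poly X \<Longrightarrow> even_poly (qinv_p_poly a X)" by (rule even_poly_qinv_p_poly)
  show "even_poly X \<Longrightarrow> even_poly (osc_poly e a X)" by (rule even_poly_osc_poly)
  show "even_poly X \<Longrightarrow> coeff (qinv_p_poly a X) k
      = \<i> * complex_of_real (2*a) * coeff X k + (- \<i> * of_nat (k+2)) * coeff X (k+2)"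
    by (simp add: coeff_qinv_p_poly algebra_simps)
  show "cmod (- \<i> * of_nat (k+2)) \<le> real k + 2"
    by (simp only: norm_mult norm_minus_cancel norm_ii norm_of_nat) simp
  show "sqrt e > 0" using assms by simp
  show "sqrt e * cmod (\<i> * complex_of_real (2*a)) < 1"
    using assms by (simp add: norm_mult mult_ac)
  show "even_poly X \<Longrightarrow> osc_poly e a (qinv_p_poly a X) - qinv_p_poly a (osc_poly e a X)
      = smult \<i> (X + smult (complex_of_real ((sqrt e)\<^sup>2)) (qinv_p_poly a (qinv_p_poly a X)))"
    using osc_poly_qinv_p_poly_commutator assms by simp
  show "(\<And>k. (\<lambda>N. coeff (Z N) k) \<longlonglongrightarrow> coeff Z0 k) \<Longrightarrow>
      (\<lambda>N. coeff (osc_poly e a (Z N)) k) \<longlonglongrightarrow> coeff (osc_poly e a Z0) k"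
    by (rule osc_poly_coeff_tendsto)
qed

lemma arctan_commutator_p_qinv_poly:
  assumes "a > 0" "e > 0" "2 * a * sqrt e < 1"
  shows "arctan_commutator (p_qinv_poly a) odd_poly (osc_poly e a)
    (\<i> * complex_of_real (2*a)) (\<lambda>k. - \<i> * of_nat (k+1)) (sqrt e)"
proof
  fix X Y c k Z Z0
  show "p_qinv_poly a (X + Y) = p_qinv_poly a X + p_qinv_poly a Y" by (rule p_qinv_poly_add)
  show "p_qinv_poly a (smult c X) = smult c (p_qinv_poly a X)" by (rule p_qinv_poly_smult)
  show "osc_poly e a (X + Y) = osc_poly e a X + osc_poly e a Y" by (rule osc_poly_add)
  show "osc_poly e a (smult c X) = smult c (osc_poly e a X)" by (rule osc_poly_smult)
  show "odd_poly X \<Longrightarrow> odd_poly (p_qinv_poly a X)" by (rule odd_poly_p_qinv_poly)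
  show "odd_poly X \<Longrightarrow> odd_poly (osc_poly e a X)" by (rule odd_poly_osc_poly)
  show "odd_poly X \<Longrightarrow> coeff (p_qinv_poly a X) k
      = \<i> * complex_of_real (2*a) * coeff X k + (- \<i> * of_nat (k+1)) * coeff X (k+2)"
    by (simp add: coeff_p_qinv_poly odd_poly_def algebra_simps)
  show "cmod (- \<i> * of_nat (k+1)) \<le> real k + 2"
    by (simp only: norm_mult norm_minus_cancel norm_ii norm_of_nat) simp
  show "sqrt e > 0" using assms by simp
  show "sqrt e * cmod (\<i> * complex_of_real (2*a)) < 1"
    using assms by (simp add: norm_mult mult_ac)
  show "odd_poly X \<Longrightarrow> osc_poly e a (p_qinv_poly a X) - p_qinv_poly a (osc_poly e a X)
      = smult \<i> (X + smult (complex_of_real ((sqrt e)\<^sup>2)) (p_qinv_poly a (p_qinv_poly a X)))"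
    using osc_poly_p_qinv_poly_commutator assms by simp
  show "(\<And>k. (\<lambda>N. coeff (Z N) k) \<longlonglongrightarrow> coeff Z0 k) \<Longrightarrow>
      (\<lambda>N. coeff (osc_poly e a (Z N)) k) \<longlonglongrightarrow> coeff (osc_poly e a Z0) k"
    by (rule osc_poly_coeff_tendsto)
qed

lemma relpowp_gauss_sum:
  fixes T :: "real \<Rightarrow> complex poly \<Rightarrow> complex poly"
  assumes C_T: "\<And>i X. i \<in> I \<Longrightarrow> C X \<Longrightarrow> C (T (r i) X)"
    and C: "\<And>i. i \<in> I \<Longrightarrow> C (P i)"
    and R: "\<And>Q. (\<forall>i\<in>I. C (Q i)) \<Longrightarrow> R (gauss_sum I r Q) (gauss_sum I r (\<lambda>i. T (r i) (Q i)))"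
  shows "(R ^^ m) (gauss_sum I r P) (gauss_sum I r (\<lambda>i. (T (r i) ^^ m) (P i)))"
proof (induction m)
  case (Suc m)
  have "\<forall>i\<in>I. C ((T (r i) ^^ m) (P i))"
  proof
    fix i assume i: "i \<in> I"
    show "C ((T (r i) ^^ m) (P i))" by (induction m) (auto intro: C_T[OF i] C[OF i])
  qed
  from R[OF this] have "R (gauss_sum I r (\<lambda>i. (T (r i) ^^ m) (P i)))
      (gauss_sum I r (\<lambda>i. (T (r i) ^^ Suc m) (P i)))"
    by simp
  with Suc.IH show ?case by (auto simp del: funpow.simps)
qed simp

lemma series_op_gauss_sum:
  fixes T :: "real \<Rightarrow> complex poly \<Rightarrow> complex poly"
  assumes fin: "finite I" and pos: "\<forall>i\<in>I. r i > 0"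
    and arctan: "\<And>i. i \<in> I \<Longrightarrow> arctan_commutator (T (r i)) C (osc_poly e (r i)) (lam i) mu (sqrt e)"
    and C: "\<And>i. i \<in> I \<Longrightarrow> C (P i)"
    and R: "\<And>Q. (\<forall>i\<in>I. C (Q i)) \<Longrightarrow> R (gauss_sum I r Q) (gauss_sum I r (\<lambda>i. T (r i) (Q i)))"
  shows "series_op R e (gauss_sum I r P) (gauss_sum I r
    (\<lambda>i. smult (- complex_of_real (1 / sqrt e)) (arctan_commutator.arctan_series (T (r i)) (sqrt e) (P i))))"
  unfolding series_op_def
proof (intro exI conjI allI)
  let ?A = "\<lambda>i. arctan_commutator.arctan_series (T (r i)) (sqrt e) (P i)"
  let ?u = "\<lambda>n. gauss_sum I r (\<lambda>i. (T (r i) ^^ (2*n+1)) (P i))"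
  show "(R ^^ (2*n+1)) (gauss_sum I r P) (?u n)" for n
    by (rule relpowp_gauss_sum[where C=C]) (auto intro: arctan_commutator.C_T[OF arctan] C R)
  show "L2 (gauss_sum I r ?A)" "L2 (gauss_sum I r (\<lambda>i. smult (- complex_of_real (1 / sqrt e)) (?A i)))"
    by (rule L2_gauss_sum[OF fin pos])+
  show "AE x in lborel. gauss_sum I r (\<lambda>i. smult (- complex_of_real (1 / sqrt e)) (?A i)) x
      = - complex_of_real (1 / sqrt e) * gauss_sum I r ?A x"
    by (rule AE_I2) (simp add: gauss_sum_smult gauss_sum_minus)
  define E where "E N i = arctan_commutator.arctan_partial (T (r i)) (sqrt e) N (P i) - ?A i" for N i
  have "gauss_sum I r (\<lambda>i. arctan_commutator.arctan_partial (T (r i)) (sqrt e) N (P i))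
      = gauss_sum I r (\<lambda>i. \<Sum>n\<le>N. smult (complex_of_real ((-1)^n / real (2*n+1) * (sqrt e)^(2*n+1)))
          ((T (r i) ^^ (2*n+1)) (P i)))" for N
    unfolding gauss_sum_def
    by (intro ext sum.cong refl)
      (simp only: arctan_commutator.arctan_partial_def[OF arctan] arctan_commutator.arctan_coeff_def[OF arctan])
  then have "(\<lambda>x. (\<Sum>n\<le>N. complex_of_real ((-1)^n / real (2*n+1) * (sqrt e)^(2*n+1)) * ?u n x)
      - gauss_sum I r ?A x) = gauss_sum I r (E N)" for N
    unfolding E_def by (simp add: fun_eq_iff gauss_sum_diff gauss_sum_sum gauss_sum_smult)
  moreover have "(\<lambda>N. L2norm (gauss_sum I r (E N))) \<longlonglongrightarrow> 0"
  proof (rule L2norm_gauss_sum_tendsto_0[OF fin pos])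
    fix N i assume i: "i \<in> I"
    have "degree (E N i) \<le> degree (P i)"
      unfolding E_def
      using arctan_commutator.degree_arctan_partial_le[OF arctan[OF i] C[OF i], of N]
        arctan_commutator.degree_arctan_series_le[OF arctan[OF i], of "P i"]
      by (intro order.trans[OF degree_diff_le_max]) simp
    also have "degree (P i) \<le> (\<Sum>i\<in>I. degree (P i))"
      using fin i by (intro member_le_sum) auto
    finally show "degree (E N i) \<le> (\<Sum>i\<in>I. degree (P i))" .
  next
    fix i k assume i: "i \<in> I"
    show "(\<lambda>N. coeff (E N i) k) \<longlonglongrightarrow> 0"
      unfolding E_def coeff_diff
      by (rule LIM_zero[OF arctan_commutator.arctan_partial_coeff_tendsto[OF arctan[OF i] C[OF i]]])
  qed
  ultimately show "(\<lambda>N. L2norm (\<lambda>x. (\<Sum>n\<le>N. complex_of_real ((-1)^n / real (2*n+1) * (sqrt e)^(2*n+1))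
      * ?u n x) - gauss_sum I r ?A x)) \<longlonglongrightarrow> 0"
    by simp
qed

lemma commutator_h_series_gauss_sum:
  fixes T :: "real \<Rightarrow> complex poly \<Rightarrow> complex poly"
  assumes fin: "finite I" and pos: "\<forall>i\<in>I. r i > 0" and "e > 0"
    and arctan: "\<And>i. i \<in> I \<Longrightarrow> arctan_commutator (T (r i)) C (osc_poly e (r i)) (lam i) mu (sqrt e)"
    and C: "\<And>i. i \<in> I \<Longrightarrow> C (P i)"
    and R: "\<And>Q. (\<forall>i\<in>I. C (Q i)) \<Longrightarrow> R (gauss_sum I r Q) (gauss_sum I r (\<lambda>i. T (r i) (Q i)))"
    and S: "\<And>Q g. (\<forall>i\<in>I. C (Q i)) \<Longrightarrow> series_op R e (gauss_sum I r Q) g \<Longrightarrow> S (gauss_sum I r Q) g"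
  shows "\<exists>Sf hSf hf Shf. S (gauss_sum I r P) Sf \<and> h_eps e Sf hSf \<and> h_eps e (gauss_sum I r P) hf
    \<and> S hf Shf \<and> (AE x in lborel. hSf x - Shf x = - \<i> * gauss_sum I r P x)"
proof (intro exI conjI)
  define c where "c = - complex_of_real (1 / sqrt e)"
  define A where "A i = arctan_commutator.arctan_series (T (r i)) (sqrt e)" for i
  let ?hP = "\<lambda>i. osc_poly e (r i) (P i)"
  have C_hP: "\<And>i. i \<in> I \<Longrightarrow> C (?hP i)"
    using arctan_commutator.C_H[OF arctan C] by blast
  show "S (gauss_sum I r P) (gauss_sum I r (\<lambda>i. smult c (A i (P i))))"
    unfolding c_def A_def using C
    by (intro S series_op_gauss_sum[where T=T and C=C and lam=lam and mu=mu and r=r and P=P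
          and R=R and I=I and e=e, OF fin pos arctan C R]) auto
  show "S (gauss_sum I r ?hP) (gauss_sum I r (\<lambda>i. smult c (A i (?hP i))))"
    unfolding c_def A_def using C_hP
    by (intro S series_op_gauss_sum[where T=T and C=C and lam=lam and mu=mu and r=r and P="?hP"
          and R=R and I=I and e=e, OF fin pos arctan C_hP R]) auto
  show "h_eps e (gauss_sum I r (\<lambda>i. smult c (A i (P i))))
      (gauss_sum I r (\<lambda>i. osc_poly e (r i) (smult c (A i (P i)))))"
    "h_eps e (gauss_sum I r P) (gauss_sum I r ?hP)"
    by (rule h_eps_gauss_sum[OF fin pos])+
  have comm: "osc_poly e (r i) (smult c (A i (P i))) - smult c (A i (?hP i)) = smult (- \<i>) (P i)"
    if "i \<in> I" for i
  proof -
    have "osc_poly e (r i) (smult c (A i (P i))) - smult c (A i (?hP i))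
        = smult c (osc_poly e (r i) (A i (P i)) - A i (?hP i))"
      by (simp add: osc_poly_smult smult_diff_right)
    also have "\<dots> = smult c (smult (\<i> * complex_of_real (sqrt e)) (P i))"
      unfolding A_def
      by (rule arg_cong[OF arctan_commutator.commutator_arctan_series[OF arctan[OF that] C[OF that]]])
    also have "\<dots> = smult (- \<i>) (P i)"
      using \<open>e > 0\<close> by (simp add: c_def)
    finally show ?thesis .
  qed
  have "gauss_sum I r (\<lambda>i. osc_poly e (r i) (smult c (A i (P i)))) x
      - gauss_sum I r (\<lambda>i. smult c (A i (?hP i))) x
      = gauss_sum I r (\<lambda>i. osc_poly e (r i) (smult c (A i (P i))) - smult c (A i (?hP i))) x" for x
    by (rule gauss_sum_diff[symmetric])
  also have "\<dots> x = gauss_sum I r (\<lambda>i. smult (- \<i>) (P i)) x" for x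
    unfolding gauss_sum_def using comm by (intro sum.cong) auto
  also have "\<dots> x = - \<i> * gauss_sum I r P x" for x
    by (rule gauss_sum_smult)
  finally show "AE x in lborel. gauss_sum I r (\<lambda>i. osc_poly e (r i) (smult c (A i (P i)))) x
      - gauss_sum I r (\<lambda>i. smult c (A i (?hP i))) x = - \<i> * gauss_sum I r P x"
    by simp
qed

lemma commutator_h_S_eps_gauss_sum:
  assumes fin: "finite I" and r: "\<forall>i\<in>I. r i > 0 \<and> 2 * r i * sqrt e < 1" and "e > 0"
    and even: "\<forall>i\<in>I. even_poly (P i)"
  shows "\<exists>Sf hSf hf Shf. S_eps e (gauss_sum I r P) Sf \<and> h_eps e Sf hSf \<and> h_eps e (gauss_sum I r P) hf
    \<and> S_eps e hf Shf \<and> (AE x in lborel. hSf x - Shf x = - \<i> * gauss_sum I r P x)"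
proof (rule commutator_h_series_gauss_sum[OF fin _ \<open>e > 0\<close>])
  show pos: "\<forall>i\<in>I. r i > 0" using r by blast
  show "\<And>i. i \<in> I \<Longrightarrow> arctan_commutator (qinv_p_poly (r i)) even_poly (osc_poly e (r i))
      (\<i> * complex_of_real (2 * r i)) (\<lambda>k. - \<i> * of_nat (k+2)) (sqrt e)"
    using r \<open>e > 0\<close> by (intro arctan_commutator_qinv_p_poly) auto
  show "\<And>Q. \<forall>i\<in>I. even_poly (Q i) \<Longrightarrow> t_op (gauss_sum I r Q) (gauss_sum I r (\<lambda>i. qinv_p_poly (r i) (Q i)))"
    by (rule t_op_gauss_sum[OF fin pos])
  show "\<And>Q g. \<forall>i\<in>I. even_poly (Q i) \<Longrightarrow> series_op t_op e (gauss_sum I r Q) g \<Longrightarrow>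
      S_eps e (gauss_sum I r Q) g"
    by (simp add: S_eps_def L2_even_gauss_sum[OF fin pos])
qed (use even in auto)

lemma commutator_h_S_star_eps_gauss_sum:
  assumes fin: "finite I" and r: "\<forall>i\<in>I. r i > 0 \<and> 2 * r i * sqrt e < 1" and "e > 0"
    and odd: "\<forall>i\<in>I. odd_poly (P i)"
  shows "\<exists>Sf hSf hf Shf. S_star_eps e (gauss_sum I r P) Sf \<and> h_eps e Sf hSf \<and> h_eps e (gauss_sum I r P) hf
    \<and> S_star_eps e hf Shf \<and> (AE x in lborel. hSf x - Shf x = - \<i> * gauss_sum I r P x)"
proof (rule commutator_h_series_gauss_sum[OF fin _ \<open>e > 0\<close>])
  show pos: "\<forall>i\<in>I. r i > 0" using r by blast
  show "\<And>i. i \<in> I \<Longrightarrow> arctan_commutator (p_qinv_poly (r i)) odd_poly (osc_poly e (r i))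
      (\<i> * complex_of_real (2 * r i)) (\<lambda>k. - \<i> * of_nat (k+1)) (sqrt e)"
    using r \<open>e > 0\<close> by (intro arctan_commutator_p_qinv_poly) auto
  show "\<And>Q. \<forall>i\<in>I. odd_poly (Q i) \<Longrightarrow> t_adj (gauss_sum I r Q) (gauss_sum I r (\<lambda>i. p_qinv_poly (r i) (Q i)))"
    by (rule t_adj_gauss_sum[OF fin pos])
  show "\<And>Q g. \<forall>i\<in>I. odd_poly (Q i) \<Longrightarrow> series_op t_adj e (gauss_sum I r Q) g \<Longrightarrow>
      S_star_eps e (gauss_sum I r Q) g"
    by (simp add: S_star_eps_def L2_odd_gauss_sum[OF fin pos])
qed (use odd in auto)

lemma gauss_sum_monomials:
  fixes F :: "(nat \<times> real) set"
  shows "(\<lambda>x. \<Sum>(n,\<alpha>)\<in>F. c (n,\<alpha>) * complex_of_real (x^(m n) * exp (- \<alpha> * x\<^sup>2 / (2 * sqrt \<epsilon>))))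
    = gauss_sum F (\<lambda>(n,\<alpha>). \<alpha> / (2 * sqrt \<epsilon>)) (\<lambda>(n,\<alpha>). monom (c (n,\<alpha>)) (m n))"
  unfolding gauss_sum_def
proof (intro ext sum.cong refl)
  fix x and i :: "nat \<times> real"
  obtain n \<alpha> where i: "i = (n, \<alpha>)" by force
  have "- \<alpha> * x\<^sup>2 / (2 * sqrt \<epsilon>) = - (\<alpha> / (2 * sqrt \<epsilon>)) * x\<^sup>2" by simp
  then show "(case i of (n, \<alpha>) \<Rightarrow> c (n,\<alpha>) * complex_of_real (x^(m n) * exp (- \<alpha> * x\<^sup>2 / (2 * sqrt \<epsilon>))))
      = gauss_term ((\<lambda>(n,\<alpha>). \<alpha> / (2 * sqrt \<epsilon>)) i) ((\<lambda>(n,\<alpha>). monom (c (n,\<alpha>)) (m n)) i) x"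
    by (simp add: i gauss_term_def poly_monom)
qed

lemma M_eps0_gauss_sum:
  assumes "f \<in> M_eps0 \<epsilon>" "0 < \<epsilon>"
  shows "\<exists>(I :: (nat \<times> real) set) r P. finite I \<and> (\<forall>i\<in>I. r i > 0 \<and> 2 * r i * sqrt \<epsilon> < 1)
    \<and> (\<forall>i\<in>I. even_poly (P i)) \<and> f = gauss_sum I r P"
proof -
  obtain F c where F: "finite F" and \<alpha>: "\<forall>(n, \<alpha>)\<in>F. 0 < \<alpha> \<and> \<alpha> < 1"
    and f: "f = gauss_sum F (\<lambda>(n, \<alpha>). \<alpha> / (2 * sqrt \<epsilon>)) (\<lambda>(n, \<alpha>). monom (c (n, \<alpha>)) (2*n))"
    using assms(1) unfolding M_eps0_def gauss_sum_monomials[where m="\<lambda>n. 2*n"] by blast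
  have "\<forall>i\<in>F. (\<lambda>(n, \<alpha>). \<alpha> / (2 * sqrt \<epsilon>)) i > 0 \<and> 2 * (\<lambda>(n, \<alpha>). \<alpha> / (2 * sqrt \<epsilon>)) i * sqrt \<epsilon> < 1"
    using \<alpha> assms(2) by auto
  moreover have "\<forall>i\<in>F. even_poly ((\<lambda>(n, \<alpha>). monom (c (n, \<alpha>)) (2*n)) i)"
    by (auto simp: even_poly_def coeff_monom)
  ultimately show ?thesis
    using F f by (intro exI[of _ F] exI[of _ "\<lambda>(n, \<alpha>). \<alpha> / (2 * sqrt \<epsilon>)"]
        exI[of _ "\<lambda>(n, \<alpha>). monom (c (n, \<alpha>)) (2*n)"]) simp
qed

lemma M_eps1_gauss_sum:
  assumes "f \<in> M_eps1 \<epsilon>" "0 < \<epsilon>"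
  shows "\<exists>(I :: (nat \<times> real) set) r P. finite I \<and> (\<forall>i\<in>I. r i > 0 \<and> 2 * r i * sqrt \<epsilon> < 1)
    \<and> (\<forall>i\<in>I. odd_poly (P i)) \<and> f = gauss_sum I r P"
proof -
  obtain F c where F: "finite F" and \<alpha>: "\<forall>(n, \<alpha>)\<in>F. 0 < \<alpha> \<and> \<alpha> < 1"
    and f: "f = gauss_sum F (\<lambda>(n, \<alpha>). \<alpha> / (2 * sqrt \<epsilon>)) (\<lambda>(n, \<alpha>). monom (c (n, \<alpha>)) (2*n+1))"
    using assms(1) unfolding M_eps1_def gauss_sum_monomials[where m="\<lambda>n. 2*n+1"] by blast
  have "\<forall>i\<in>F. (\<lambda>(n, \<alpha>). \<alpha> / (2 * sqrt \<epsilon>)) i > 0 \<and> 2 * (\<lambda>(n, \<alpha>). \<alpha> / (2 * sqrt \<epsilon>)) i * sqrt \<epsilon> < 1"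
    using \<alpha> assms(2) by auto
  moreover have "\<forall>i\<in>F. odd_poly ((\<lambda>(n, \<alpha>). monom (c (n, \<alpha>)) (2*n+1)) i)"
    by (auto simp: odd_poly_def coeff_monom)
  ultimately show ?thesis
    using F f by (intro exI[of _ F] exI[of _ "\<lambda>(n, \<alpha>). \<alpha> / (2 * sqrt \<epsilon>)"]
        exI[of _ "\<lambda>(n, \<alpha>). monom (c (n, \<alpha>)) (2*n+1)"]) simp
qed

theorem lemma4p1:
  fixes \<epsilon> :: real
  assumes "0 < \<epsilon>" and "\<epsilon> \<le> 1"
  shows "(\<forall>f\<in>M_eps0 \<epsilon>. \<exists>Sf hSf hf Shf.
            S_eps \<epsilon> f Sf \<and> h_eps \<epsilon> Sf hSf \<and> h_eps \<epsilon> f hf \<and> S_eps \<epsilon> hf Shf \<and>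
            (AE x in lborel. hSf x - Shf x = - \<i> * f x))
       \<and> (\<forall>f\<in>M_eps1 \<epsilon>. \<exists>Sf hSf hf Shf.
            S_star_eps \<epsilon> f Sf \<and> h_eps \<epsilon> Sf hSf \<and> h_eps \<epsilon> f hf \<and> S_star_eps \<epsilon> hf Shf \<and>
            (AE x in lborel. hSf x - Shf x = - \<i> * f x))"
proof (intro conjI ballI)
  fix f
  assume "f \<in> M_eps0 \<epsilon>"
  from M_eps0_gauss_sum[OF this \<open>0 < \<epsilon>\<close>]
  show "\<exists>Sf hSf hf Shf. S_eps \<epsilon> f Sf \<and> h_eps \<epsilon> Sf hSf \<and> h_eps \<epsilon> f hf \<and> S_eps \<epsilon> hf Shf \<and>
      (AE x in lborel. hSf x - Shf x = - \<i> * f x)"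
  proof (elim exE conjE)
    fix I r P
    assume I: "finite I" and r: "\<forall>i\<in>I. r i > 0 \<and> 2 * r i * sqrt \<epsilon> < 1"
      and P: "\<forall>i\<in>I. even_poly (P i)" and f: "f = gauss_sum I r P"
    show ?thesis
      unfolding f by (rule commutator_h_S_eps_gauss_sum[OF I r \<open>0 < \<epsilon>\<close> P])
  qed
next
  fix f
  assume "f \<in> M_eps1 \<epsilon>"
  from M_eps1_gauss_sum[OF this \<open>0 < \<epsilon>\<close>]
  show "\<exists>Sf hSf hf Shf. S_star_eps \<epsilon> f Sf \<and> h_eps \<epsilon> Sf hSf \<and> h_eps \<epsilon> f hf \<and> S_star_eps \<epsilon> hf Shf \<and>
      (AE x in lborel. hSf x - Shf x = - \<i> * f x)"
  proof (elim exE conjE)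
    fix I r P
    assume I: "finite I" and r: "\<forall>i\<in>I. r i > 0 \<and> 2 * r i * sqrt \<epsilon> < 1"
      and P: "\<forall>i\<in>I. odd_poly (P i)" and f: "f = gauss_sum I r P"
    show ?thesis
      unfolding f by (rule commutator_h_S_star_eps_gauss_sum[OF I r \<open>0 < \<epsilon>\<close> P])
  qed
qed

end
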